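(* Let $K$ be an infinite, algebraically closed, totally ordered quasi-field of characteristic $1$, and let $P,Q\in K[X_1,\dots,X_n]$. (a) The polynomial functions $K^n\to K$ defined by $P$ and by its convex hull $\mathrm{conv}(P)$ coincide. (b) The polynomial functions $\tilde P$ and $\tilde Q$ are equal if and only if $\mathrm{conv}(P)=\mathrm{conv}(Q)$.
   Context: A quasi-field of characteristic $1$ is a commutative semiring $K$ with $1+1=1$ in which every nonzero element is multiplicatively invertible; ordered by $u\le v$ iff $u+v=v$, totally ordered meaning the order is total (so $u+v=\max(u,v)$). $K$ is algebraically closed if every nonconstant polynomial of $K[X]$ has a root in $K$ (a root of $P$ being a point where $P$ vanishes or where the maximum of its monomials is attained at least twice); in particular every element has unique $m$-th roots. For $P=\sum_{\alpha\in I}\lambda_\alpha X^\alpha$ ($I\subset\mathbb N^n$ finite, $\lambda_\alpha\neq0$), $\mathrm{conv}(P)=\sum_{\gamma}\mu_\gamma X^\gamma$, the sum over lattice points $\gamma\in\mathbb N^n$ of the convex hull of $I$, where $\mu_\gamma$ is the largest value of $\left(\prod_{\alpha\in I}\lambda_\alpha^{c_\alpha}\right)^{1/m}$ over all $m\ge1$ and $c_\alpha\in\mathbb N$ with $\sum c_\alpha=m$ and $\sum c_\alpha\alpha=m\gamma$; equivalently, the smallest "convex" polynomial $\ge P$. $\tilde P:K^n\to K$ denotes $x\mapsto P(x)$. *)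

theory Defs
  imports "HOL-Analysis.Analysis"
begin

class qfield1 = comm_semiring_1 +
  assumes one_plus_one_qf: "1 + 1 = 1"
  and mult_inv_ex_qf: "x \<noteq> 0 \<Longrightarrow> \<exists>y. x * y = 1"

definition qf_le :: "'a::qfield1 \<Rightarrow> 'a \<Rightarrow> bool" where
  "qf_le u v \<longleftrightarrow> u + v = v"

definition qf_total :: "'a::qfield1 itself \<Rightarrow> bool" where
  "qf_total _ \<longleftrightarrow> (\<forall>u v::'a. qf_le u v \<or> qf_le v u)"

text \<open>Univariate polynomials as finitely supported coefficient functions.
A root of p: p vanishes at x, or the maximum of its monomials is attained at least twice.\<close>
definition upoly_eval :: "(nat \<Rightarrow> 'a::qfield1) \<Rightarrow> 'a \<Rightarrow> 'a" where
  "upoly_eval p x = (\<Sum>k\<in>{k. p k \<noteq> 0}. p k * x ^ k)"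

definition upoly_root :: "(nat \<Rightarrow> 'a::qfield1) \<Rightarrow> 'a \<Rightarrow> bool" where
  "upoly_root p x \<longleftrightarrow> upoly_eval p x = 0 \<or>
     (\<exists>k1 k2. k1 \<noteq> k2 \<and> p k1 \<noteq> 0 \<and> p k2 \<noteq> 0 \<and>
        p k1 * x ^ k1 = upoly_eval p x \<and> p k2 * x ^ k2 = upoly_eval p x)"

definition qf_alg_closed :: "'a::qfield1 itself \<Rightarrow> bool" where
  "qf_alg_closed _ \<longleftrightarrow>
     (\<forall>p::nat \<Rightarrow> 'a. finite {k. p k \<noteq> 0} \<and> (\<exists>k>0. p k \<noteq> 0) \<longrightarrow> (\<exists>x. upoly_root p x))"

definition supp_poly :: "(('n::finite \<Rightarrow> nat) \<Rightarrow> 'a::qfield1) \<Rightarrow> ('n \<Rightarrow> nat) set" where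
  "supp_poly P = {\<alpha>. P \<alpha> \<noteq> 0}"

definition peval :: "(('n::finite \<Rightarrow> nat) \<Rightarrow> 'a::qfield1) \<Rightarrow> ('n \<Rightarrow> 'a) \<Rightarrow> 'a" where
  "peval P x = (\<Sum>\<alpha>\<in>supp_poly P. P \<alpha> * (\<Prod>i\<in>UNIV. x i ^ \<alpha> i))"

definition exp_to_real :: "('n::finite \<Rightarrow> nat) \<Rightarrow> real ^ 'n" where
  "exp_to_real \<alpha> = (\<chi> i. real (\<alpha> i))"

definition hull_lattice :: "(('n::finite \<Rightarrow> nat) \<Rightarrow> 'a::qfield1) \<Rightarrow> ('n \<Rightarrow> nat) set" where
  "hull_lattice P = {\<gamma>. exp_to_real \<gamma> \<in> convex hull (exp_to_real ` supp_poly P)}"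

definition conv_cands :: "(('n::finite \<Rightarrow> nat) \<Rightarrow> 'a::qfield1) \<Rightarrow> ('n \<Rightarrow> nat) \<Rightarrow> 'a set" where
  "conv_cands P \<gamma> = {y. \<exists>(m::nat) (c::('n \<Rightarrow> nat) \<Rightarrow> nat). m \<ge> 1 \<and>
      (\<Sum>\<alpha>\<in>supp_poly P. c \<alpha>) = m \<and>
      (\<forall>i. (\<Sum>\<alpha>\<in>supp_poly P. c \<alpha> * \<alpha> i) = m * \<gamma> i) \<and>
      y ^ m = (\<Prod>\<alpha>\<in>supp_poly P. P \<alpha> ^ c \<alpha>)}"

definition conv_poly :: "(('n::finite \<Rightarrow> nat) \<Rightarrow> 'a::qfield1) \<Rightarrow> ('n \<Rightarrow> nat) \<Rightarrow> 'a" where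
  "conv_poly P \<gamma> = (if \<gamma> \<in> hull_lattice P
     then (THE y. y \<in> conv_cands P \<gamma> \<and> (\<forall>z\<in>conv_cands P \<gamma>. qf_le z y)) else 0)"

end

theory Submission
  imports Defs
begin

text \<open>
  For a lattice point \<open>\<gamma>\<close> of the convex hull of \<open>supp P\<close>, the
  candidate coefficients are the roots \<open>(\<Prod> P\<^sub>\<alpha>\<^sup>c\<^sup>\<^sub>\<alpha>)\<^sup>1\<^sup>/\<^sup>m\<close> along rational convex combinations
  \<open>\<gamma> = \<Sum> (c\<^sub>\<alpha>/m) \<alpha>\<close>.  The key finiteness statement is that whether a monomial \<open>y x\<^sup>\<gamma>\<close>
  can strictly dominate all monomials \<open>P\<^sub>\<alpha> x\<^sup>\<alpha>\<close> at some point is decided by finitely many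
  candidates.  We obtain it from a multiplicative Fourier--Motzkin elimination, proved
  once for an abstract totally ordered divisible abelian group (locale
  \<open>ordered_div_group\<close>): feasibility of a finite system of strict monomial inequalities
  is decided by finitely many certificates, i.e. integer combinations of the constraints
  in which the exponents cancel.  Over the positive reals this shows that the lattice
  points of the convex hull are exactly those admitting rational convex weights, so
  there are finitely many; over the nonzero elements of the quasi-field it shows that the
  candidates have a maximum (the coefficient of \<open>conv(P)\<close>) and that any monomial lying
  below \<open>P\<close> everywhere has its coefficient below that maximum.  Part (a) follows because
  each monomial of \<open>conv(P)\<close> lies below \<open>P\<close> (a weighted product of the monomials of \<open>P\<close>)
  while \<open>conv(P) \<ge> P\<close> coefficientwise; part (b) because \<open>conv\<close> is monotone in the
  function defined and that function is recovered from \<open>conv(P)\<close> by (a).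
\<close>

definition monom :: "('n::finite \<Rightarrow> 'a::comm_monoid_mult) \<Rightarrow> ('n \<Rightarrow> nat) \<Rightarrow> 'a" where
  "monom x f = (\<Prod>j\<in>UNIV. x j ^ f j)"

lemma prod_power_distrib_monoid: "prod f A ^ n = (\<Prod>a\<in>A. f a ^ n)"
  for f :: "'b \<Rightarrow> 'a::comm_monoid_mult"
  by (induct A rule: infinite_finite_induct) (auto simp: power_mult_distrib)

lemma monom_zero: "monom x (\<lambda>j. 0) = 1"
  by (simp add: monom_def)

lemma monom_add: "monom x (\<lambda>j. f j + g j) = monom x f * monom x g"
  by (simp add: monom_def power_add prod.distrib)

lemma monom_scale: "monom x (\<lambda>j. k * f j) = monom x f ^ k"
  by (simp add: monom_def prod_power_distrib_monoid flip: power_mult mult.commute)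

lemma monom_combination:
  "finite I \<Longrightarrow> monom x (\<lambda>j. \<Sum>r\<in>I. w r * f r j) = (\<Prod>r\<in>I. monom x (f r) ^ w r)"
proof (induction I rule: finite_induct)
  case empty
  then show ?case by (simp add: monom_zero)
next
  case (insert a F)
  then have "monom x (\<lambda>j. \<Sum>r\<in>insert a F. w r * f r j)
      = monom x (\<lambda>j. w a * f a j + (\<Sum>r\<in>F. w r * f r j))"
    by simp
  also have "\<dots> = monom x (f a) ^ w a * monom x (\<lambda>j. \<Sum>r\<in>F. w r * f r j)"
    by (simp add: monom_add monom_scale)
  finally show ?case using insert by simp
qed

lemma monom_split: "monom x f = monom x (f(i := 0)) * x i ^ f i"
proof -
  have "monom x f = x i ^ f i * (\<Prod>j\<in>UNIV - {i}. x j ^ f j)"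
    unfolding monom_def by (subst prod.remove[of _ i]) auto
  moreover have "monom x (f(i := 0)) = (\<Prod>j\<in>UNIV - {i}. x j ^ f j)"
    unfolding monom_def by (subst prod.remove[of _ i]) (auto intro!: prod.cong)
  ultimately show ?thesis by (simp add: mult.commute)
qed

lemma monom_update: "monom (x(i := z)) f = monom x (f(i := 0)) * z ^ f i"
proof -
  have "monom (x(i := z)) (f(i := 0)) = monom x (f(i := 0))"
    unfolding monom_def by (rule prod.cong) auto
  then show ?thesis using monom_split[of "x(i := z)" f i] by simp
qed

text \<open>The nonzero
  elements of our quasi-field and the positive reals are the two instances used below.\<close>

locale ordered_div_group =
  fixes C :: "'a::comm_monoid_mult set" and less :: "'a \<Rightarrow> 'a \<Rightarrow> bool" (infix "\<sqsubset>" 50)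
  assumes one_mem: "1 \<in> C"
    and mult_mem: "a \<in> C \<Longrightarrow> b \<in> C \<Longrightarrow> a * b \<in> C"
    and inverse_ex: "a \<in> C \<Longrightarrow> \<exists>b\<in>C. a * b = 1"
    and irrefl: "\<not> a \<sqsubset> a"
    and trans: "a \<in> C \<Longrightarrow> b \<in> C \<Longrightarrow> c \<in> C \<Longrightarrow> a \<sqsubset> b \<Longrightarrow> b \<sqsubset> c \<Longrightarrow> a \<sqsubset> c"
    and total: "a \<in> C \<Longrightarrow> b \<in> C \<Longrightarrow> a \<noteq> b \<Longrightarrow> a \<sqsubset> b \<or> b \<sqsubset> a"
    and mult_right_mono: "a \<in> C \<Longrightarrow> b \<in> C \<Longrightarrow> c \<in> C \<Longrightarrow> a \<sqsubset> b \<Longrightarrow> a * c \<sqsubset> b * c"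
    and roots_ex: "a \<in> C \<Longrightarrow> n > 0 \<Longrightarrow> \<exists>r\<in>C. r ^ n = a"
    and nontrivial: "\<exists>g\<in>C. 1 \<sqsubset> g"
begin

abbreviation less_eq (infix "\<sqsubseteq>" 50) where "a \<sqsubseteq> b \<equiv> a \<sqsubset> b \<or> a = b"

lemma power_mem: "a \<in> C \<Longrightarrow> a ^ n \<in> C"
  by (induction n) (auto simp: one_mem mult_mem)

lemma prod_mem: "(\<And>r. r \<in> I \<Longrightarrow> f r \<in> C) \<Longrightarrow> prod f I \<in> C"
  by (induction I rule: infinite_finite_induct) (auto simp: one_mem mult_mem)

lemma monom_mem: "(\<And>j. x j \<in> C) \<Longrightarrow> monom x f \<in> C"
  unfolding monom_def by (rule prod_mem) (auto intro: power_mem)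

lemma asym: "a \<in> C \<Longrightarrow> b \<in> C \<Longrightarrow> a \<sqsubset> b \<Longrightarrow> \<not> b \<sqsubset> a"
  using trans irrefl by blast

lemma le_less_trans: "a \<in> C \<Longrightarrow> b \<in> C \<Longrightarrow> c \<in> C \<Longrightarrow> a \<sqsubseteq> b \<Longrightarrow> b \<sqsubset> c \<Longrightarrow> a \<sqsubset> c"
  using trans by blast

lemma less_le_trans: "a \<in> C \<Longrightarrow> b \<in> C \<Longrightarrow> c \<in> C \<Longrightarrow> a \<sqsubset> b \<Longrightarrow> b \<sqsubseteq> c \<Longrightarrow> a \<sqsubset> c"
  using trans by blast

lemma mult_left_mono: "a \<in> C \<Longrightarrow> b \<in> C \<Longrightarrow> c \<in> C \<Longrightarrow> a \<sqsubset> b \<Longrightarrow> c * a \<sqsubset> c * b"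
  using mult_right_mono by (simp add: mult.commute)

lemma mult_right_cancel: "a \<in> C \<Longrightarrow> b \<in> C \<Longrightarrow> c \<in> C \<Longrightarrow> a * c \<sqsubset> b * c \<Longrightarrow> a \<sqsubset> b"
  by (metis asym irrefl mult_right_mono mult_mem total)

lemma mult_le_less_mono:
  "a \<in> C \<Longrightarrow> b \<in> C \<Longrightarrow> c \<in> C \<Longrightarrow> d \<in> C \<Longrightarrow> a \<sqsubseteq> b \<Longrightarrow> c \<sqsubset> d \<Longrightarrow> a * c \<sqsubset> b * d"
  by (meson mult_right_mono mult_left_mono mult_mem trans)

lemma mult_le_mono:
  "a \<in> C \<Longrightarrow> b \<in> C \<Longrightarrow> c \<in> C \<Longrightarrow> d \<in> C \<Longrightarrow> a \<sqsubseteq> b \<Longrightarrow> c \<sqsubseteq> d \<Longrightarrow> a * c \<sqsubseteq> b * d"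
  using mult_le_less_mono mult_right_mono by blast

lemma power_strict_mono: "a \<in> C \<Longrightarrow> b \<in> C \<Longrightarrow> a \<sqsubset> b \<Longrightarrow> n > 0 \<Longrightarrow> a ^ n \<sqsubset> b ^ n"
proof (induction n)
  case (Suc n)
  then show ?case
    by (cases "n = 0") (auto simp: mult_le_less_mono power_mem)
qed simp

lemma power_mono: "a \<in> C \<Longrightarrow> b \<in> C \<Longrightarrow> a \<sqsubseteq> b \<Longrightarrow> a ^ n \<sqsubseteq> b ^ n"
  by (cases "n = 0") (auto simp: power_strict_mono)

lemma power_less_imp_less: "a \<in> C \<Longrightarrow> b \<in> C \<Longrightarrow> a ^ n \<sqsubset> b ^ n \<Longrightarrow> a \<sqsubset> b"
  by (metis asym irrefl power_mem power_mono total)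

lemma power_less_iff: "a \<in> C \<Longrightarrow> b \<in> C \<Longrightarrow> n > 0 \<Longrightarrow> a ^ n \<sqsubset> b ^ n \<longleftrightarrow> a \<sqsubset> b"
  using power_strict_mono power_less_imp_less by blast

lemma prod_mono:
  "finite I \<Longrightarrow> (\<And>r. r \<in> I \<Longrightarrow> A r \<in> C \<and> B r \<in> C \<and> B r \<sqsubseteq> A r) \<Longrightarrow> prod B I \<sqsubseteq> prod A I"
  by (induction I rule: finite_induct) (auto simp: mult_le_mono prod_mem)

lemma prod_strict_mono:
  assumes "finite I" "\<And>r. r \<in> I \<Longrightarrow> A r \<in> C \<and> B r \<in> C \<and> B r \<sqsubseteq> A r"
    and "r0 \<in> I" "B r0 \<sqsubset> A r0"
  shows "prod B I \<sqsubset> prod A I"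
proof -
  have "prod B I = B r0 * prod B (I - {r0})" "prod A I = A r0 * prod A (I - {r0})"
    using assms(1,3) by (simp_all add: prod.remove)
  moreover have rest: "prod B (I - {r0}) \<sqsubseteq> prod A (I - {r0})"
    using assms(1,2) by (intro prod_mono) auto
  moreover have "prod B (I - {r0}) * B r0 \<sqsubset> prod A (I - {r0}) * A r0"
    by (rule mult_le_less_mono[OF _ _ _ _ rest]) (use assms in \<open>auto intro: prod_mem\<close>)
  ultimately show ?thesis by (simp add: mult.commute)
qed

lemma prod_power_strict_mono:
  "finite I \<Longrightarrow> (\<And>r. r \<in> I \<Longrightarrow> A r \<in> C \<and> B r \<in> C \<and> B r \<sqsubset> A r) \<Longrightarrow> r0 \<in> I \<Longrightarrow> w r0 > 0
   \<Longrightarrow> (\<Prod>r\<in>I. B r ^ w r) \<sqsubset> (\<Prod>r\<in>I. A r ^ w r)"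
  by (rule prod_strict_mono) (auto simp: power_mem power_strict_mono power_mono)

definition ginv :: "'a \<Rightarrow> 'a" where
  "ginv a = (SOME b. b \<in> C \<and> a * b = 1)"

definition groot :: "nat \<Rightarrow> 'a \<Rightarrow> 'a" where
  "groot n a = (SOME r. r \<in> C \<and> r ^ n = a)"

lemma ginv: "a \<in> C \<Longrightarrow> ginv a \<in> C \<and> a * ginv a = 1"
  unfolding ginv_def by (rule someI_ex) (use inverse_ex in blast)

lemma groot: "a \<in> C \<Longrightarrow> n > 0 \<Longrightarrow> groot n a \<in> C \<and> groot n a ^ n = a"
  unfolding groot_def by (rule someI_ex) (use roots_ex in blast)

lemma inverse_less_one: "g \<in> C \<Longrightarrow> 1 \<sqsubset> g \<Longrightarrow> ginv g \<sqsubset> 1"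
  using mult_right_mono[OF one_mem _ _ _, of g "ginv g"] ginv[of g] by simp

text \<open>Reversing the order yields again such a group; this gives minima from maxima and
  lower bounds from upper bounds.\<close>
lemma dual: "ordered_div_group C (\<lambda>a b. b \<sqsubset> a)"
proof
  obtain g where "g \<in> C" "1 \<sqsubset> g" using nontrivial by blast
  then show "\<exists>g\<in>C. g \<sqsubset> 1" using inverse_less_one ginv by blast
next
  show "\<And>a b c. a \<in> C \<Longrightarrow> b \<in> C \<Longrightarrow> c \<in> C \<Longrightarrow> b \<sqsubset> a \<Longrightarrow> c \<sqsubset> b \<Longrightarrow> c \<sqsubset> a"
    using trans by blast
qed (auto simp: one_mem mult_mem inverse_ex irrefl total mult_right_mono roots_ex)

lemma max_ex: "finite X \<Longrightarrow> X \<noteq> {} \<Longrightarrow> X \<subseteq> C \<Longrightarrow> \<exists>m\<in>X. \<forall>x\<in>X. x \<sqsubseteq> m"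
proof (induction X rule: finite_ne_induct)
  case (insert x F)
  then obtain m where m: "m \<in> F" "\<forall>y\<in>F. y \<sqsubseteq> m" by auto
  show ?case
  proof (cases "m \<sqsubset> x")
    case True
    then have "\<forall>y\<in>F. y \<sqsubset> x" using m insert.prems trans by blast
    then show ?thesis by auto
  next
    case False
    then show ?thesis using total[of x m] insert.prems m by auto
  qed
qed simp

lemma min_ex: "finite X \<Longrightarrow> X \<noteq> {} \<Longrightarrow> X \<subseteq> C \<Longrightarrow> \<exists>m\<in>X. \<forall>x\<in>X. m \<sqsubseteq> x"
  using ordered_div_group.max_ex[OF dual, of X] by auto

lemma below_ex: "finite B \<Longrightarrow> B \<subseteq> C \<Longrightarrow> \<exists>z\<in>C. \<forall>y\<in>B. z \<sqsubset> y"
proof (induction B rule: finite_induct)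
  case empty
  then show ?case using one_mem by blast
next
  case (insert y B)
  then obtain z where z: "z \<in> C" "\<forall>b\<in>B. z \<sqsubset> b" and y: "y \<in> C" by auto
  obtain g where g: "g \<in> C" "1 \<sqsubset> g" using nontrivial by blast
  have below_y: "y * ginv g \<in> C" "y * ginv g \<sqsubset> y"
    using mult_left_mono[OF _ one_mem y inverse_less_one[OF g]] ginv[OF g(1)] mult_mem y by auto
  show ?case
  proof (cases "z \<sqsubset> y")
    case True
    then show ?thesis using z by auto
  next
    case False
    then have "y \<sqsubseteq> z" using total[OF y z(1)] by blast
    then have "y * ginv g \<sqsubset> z" using less_le_trans[OF below_y(1) y z(1) below_y(2)] by blast
    then show ?thesis using below_y z(2) trans[OF below_y(1) z(1)] insert.prems by blast
  qed
qed

lemma above_ex: "finite A \<Longrightarrow> A \<subseteq> C \<Longrightarrow> \<exists>z\<in>C. \<forall>x\<in>A. x \<sqsubset> z"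
  using ordered_div_group.below_ex[OF dual, of A] by auto

text \<open>Density: \<open>\<surd>(a b)\<close> lies strictly between \<open>a \<sqsubset> b\<close>.\<close>
lemma between_ex:
  assumes "a \<in> C" "b \<in> C" "a \<sqsubset> b"
  shows "\<exists>z\<in>C. a \<sqsubset> z \<and> z \<sqsubset> b"
proof -
  define z where "z = groot 2 (a * b)"
  have z: "z \<in> C" "z ^ 2 = a * b" using groot[of "a * b" 2] assms mult_mem z_def by auto
  have "a ^ 2 \<sqsubset> z ^ 2" "z ^ 2 \<sqsubset> b ^ 2"
    using mult_left_mono[OF assms(1,2,1,3)] mult_right_mono[OF assms(1,2,2,3)] z
    by (simp_all add: power2_eq_square)
  then show ?thesis using power_less_imp_less assms z by blast
qed

lemma interval_ex:
  assumes "finite A" "finite B" "A \<subseteq> C" "B \<subseteq> C" "\<forall>x\<in>A. \<forall>y\<in>B. x \<sqsubset> y"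
  shows "\<exists>z\<in>C. (\<forall>x\<in>A. x \<sqsubset> z) \<and> (\<forall>y\<in>B. z \<sqsubset> y)"
proof (cases "A = {}")
  case True
  then show ?thesis using below_ex[OF assms(2,4)] by blast
next
  case A: False
  show ?thesis
  proof (cases "B = {}")
    case True
    then show ?thesis using above_ex[OF assms(1,3)] by blast
  next
    case B: False
    obtain M where M: "M \<in> A" "\<forall>x\<in>A. x \<sqsubseteq> M" using max_ex[OF assms(1) A assms(3)] by blast
    obtain m where m: "m \<in> B" "\<forall>y\<in>B. m \<sqsubseteq> y" using min_ex[OF assms(2) B assms(4)] by blast
    have MC: "M \<in> C" and mC: "m \<in> C" using M(1) m(1) assms(3,4) by auto
    obtain z where z: "z \<in> C" "M \<sqsubset> z" "z \<sqsubset> m"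
      using between_ex[OF MC mC] assms(5) M(1) m(1) by blast
    have "x \<sqsubset> z" if "x \<in> A" for x
      using le_less_trans[OF _ MC z(1) _ z(2)] M(2) that assms(3) by blast
    moreover have "z \<sqsubset> y" if "y \<in> B" for y
      using less_le_trans[OF z(1) mC _ z(3)] m(2) that assms(4) by blast
    ultimately show ?thesis using z(1) by blast
  qed
qed

text \<open>The \<open>a\<close>-th root of \<open>\<alpha>/\<beta>\<close> is the threshold of the constraint \<open>\<alpha> \<sqsubset> \<beta> z\<^sup>a\<close> on \<open>z\<close>,
  and symmetrically for constraints \<open>\<alpha> z\<^sup>b \<sqsubset> \<beta>\<close>.\<close>
lemma above_root_threshold:
  assumes "a > 0" "\<alpha> \<in> C" "\<beta> \<in> C" "z \<in> C" "groot a (\<alpha> * ginv \<beta>) \<sqsubset> z"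
  shows "\<alpha> \<sqsubset> \<beta> * z ^ a"
proof -
  define l where "l = groot a (\<alpha> * ginv \<beta>)"
  have l: "l \<in> C" "l ^ a = \<alpha> * ginv \<beta>"
    using groot[of "\<alpha> * ginv \<beta>" a] assms(1-3) ginv mult_mem by (auto simp: l_def)
  have "l ^ a \<sqsubset> z ^ a"
    using power_strict_mono[OF l(1) assms(4) _ assms(1)] assms(5) by (simp add: l_def)
  then have "l ^ a * \<beta> \<sqsubset> z ^ a * \<beta>"
    using l(1) assms(3,4) power_mem by (intro mult_right_mono) auto
  moreover have "l ^ a * \<beta> = \<alpha>"
    using l(2) ginv[OF assms(3)] by (simp add: ac_simps)
  ultimately show ?thesis by (simp add: mult.commute)
qed

lemma below_root_threshold:
  assumes "b > 0" "\<alpha> \<in> C" "\<beta> \<in> C" "z \<in> C" "z \<sqsubset> groot b (\<beta> * ginv \<alpha>)"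
  shows "\<alpha> * z ^ b \<sqsubset> \<beta>"
proof -
  define u where "u = groot b (\<beta> * ginv \<alpha>)"
  have u: "u \<in> C" "u ^ b = \<beta> * ginv \<alpha>"
    using groot[of "\<beta> * ginv \<alpha>" b] assms(1-3) ginv mult_mem by (auto simp: u_def)
  have "z ^ b \<sqsubset> u ^ b"
    using power_strict_mono[OF assms(4) u(1) _ assms(1)] assms(5) by (simp add: u_def)
  then have "z ^ b * \<alpha> \<sqsubset> u ^ b * \<alpha>"
    using u(1) assms(2,4) power_mem by (intro mult_right_mono) auto
  moreover have "u ^ b * \<alpha> = \<beta> * (\<alpha> * ginv \<alpha>)"
    using u(2) by (simp add: ac_simps)
  then have "u ^ b * \<alpha> = \<beta>"
    using ginv[OF assms(2)] by simp
  ultimately show ?thesis by (simp add: mult.commute)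
qed

text \<open>The thresholds of a lower constraint \<open>\<alpha>\<^sub>r \<sqsubset> \<beta>\<^sub>r z\<^sup>a\<close> and an upper constraint
  \<open>\<alpha>\<^sub>s z\<^sup>b \<sqsubset> \<beta>\<^sub>s\<close> are in the right order when the constraint obtained by eliminating \<open>z\<close>
  holds.\<close>
lemma root_thresholds_ordered:
  assumes "a > 0" "b > 0" "\<alpha>\<^sub>r \<in> C" "\<beta>\<^sub>r \<in> C" "\<alpha>\<^sub>s \<in> C" "\<beta>\<^sub>s \<in> C"
    and H: "\<alpha>\<^sub>r ^ b * \<alpha>\<^sub>s ^ a \<sqsubset> \<beta>\<^sub>r ^ b * \<beta>\<^sub>s ^ a"
  shows "groot a (\<alpha>\<^sub>r * ginv \<beta>\<^sub>r) \<sqsubset> groot b (\<beta>\<^sub>s * ginv \<alpha>\<^sub>s)"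
proof -
  define l where "l = groot a (\<alpha>\<^sub>r * ginv \<beta>\<^sub>r)"
  define u where "u = groot b (\<beta>\<^sub>s * ginv \<alpha>\<^sub>s)"
  have inv: "ginv \<beta>\<^sub>r \<in> C" "ginv \<alpha>\<^sub>s \<in> C" "\<beta>\<^sub>r * ginv \<beta>\<^sub>r = 1" "\<alpha>\<^sub>s * ginv \<alpha>\<^sub>s = 1"
    using ginv assms(4,5) by auto
  have l: "l \<in> C" "l ^ a = \<alpha>\<^sub>r * ginv \<beta>\<^sub>r" and u: "u \<in> C" "u ^ b = \<beta>\<^sub>s * ginv \<alpha>\<^sub>s"
    using groot assms inv mult_mem by (auto simp: l_def u_def)
  define k where "k = ginv \<beta>\<^sub>r ^ b * ginv \<alpha>\<^sub>s ^ a"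
  have "(\<alpha>\<^sub>r ^ b * \<alpha>\<^sub>s ^ a) * k \<sqsubset> (\<beta>\<^sub>r ^ b * \<beta>\<^sub>s ^ a) * k"
    using assms inv by (intro mult_right_mono) (auto simp: k_def intro!: mult_mem power_mem)
  moreover have "(\<alpha>\<^sub>r ^ b * \<alpha>\<^sub>s ^ a) * k = (\<alpha>\<^sub>r * ginv \<beta>\<^sub>r) ^ b * (\<alpha>\<^sub>s * ginv \<alpha>\<^sub>s) ^ a"
    by (simp add: k_def power_mult_distrib ac_simps)
  moreover have "(\<beta>\<^sub>r ^ b * \<beta>\<^sub>s ^ a) * k = (\<beta>\<^sub>r * ginv \<beta>\<^sub>r) ^ b * (\<beta>\<^sub>s * ginv \<alpha>\<^sub>s) ^ a"
    by (simp add: k_def power_mult_distrib ac_simps)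
  ultimately have "(l ^ a) ^ b \<sqsubset> (u ^ b) ^ a"
    using l(2) u(2) inv(3,4) by simp
  then have "l ^ (a * b) \<sqsubset> u ^ (a * b)"
    by (simp add: power_mult mult.commute[of a b] flip: power_mult)
  then show ?thesis using power_less_imp_less l u by (simp add: l_def u_def)
qed

text \<open>Separation: lower and upper constraints on one variable \<open>z\<close> that are pairwise
  compatible are simultaneously satisfiable.  This is the core of Fourier--Motzkin
  elimination.\<close>
lemma separation:
  assumes "finite L" "finite U"
    and L: "\<forall>r\<in>L. a r > 0 \<and> \<alpha> r \<in> C \<and> \<beta> r \<in> C"
    and U: "\<forall>s\<in>U. b s > 0 \<and> \<alpha> s \<in> C \<and> \<beta> s \<in> C"
    and H: "\<forall>r\<in>L. \<forall>s\<in>U. \<alpha> r ^ b s * \<alpha> s ^ a r \<sqsubset> \<beta> r ^ b s * \<beta> s ^ a r"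
  shows "\<exists>z\<in>C. (\<forall>r\<in>L. \<alpha> r \<sqsubset> \<beta> r * z ^ a r) \<and> (\<forall>s\<in>U. \<alpha> s * z ^ b s \<sqsubset> \<beta> s)"
proof -
  define l where "l r = groot (a r) (\<alpha> r * ginv (\<beta> r))" for r
  define u where "u s = groot (b s) (\<beta> s * ginv (\<alpha> s))" for s
  have "l ` L \<subseteq> C" "u ` U \<subseteq> C"
    using L U groot ginv mult_mem by (auto simp: l_def u_def)
  moreover have "\<forall>x\<in>l ` L. \<forall>y\<in>u ` U. x \<sqsubset> y"
    using L U H root_thresholds_ordered by (auto simp: l_def u_def)
  ultimately obtain z where z: "z \<in> C" "\<forall>r\<in>L. l r \<sqsubset> z" "\<forall>s\<in>U. z \<sqsubset> u s"
    using interval_ex[of "l ` L" "u ` U"] assms(1,2) by auto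
  have "\<forall>r\<in>L. \<alpha> r \<sqsubset> \<beta> r * z ^ a r"
    using L z above_root_threshold by (auto simp: l_def)
  moreover have "\<forall>s\<in>U. \<alpha> s * z ^ b s \<sqsubset> \<beta> s"
    using U z below_root_threshold by (auto simp: u_def)
  ultimately show ?thesis using z(1) by blast
qed

end

text \<open>Systems of strict monomial inequalities are indexed by finite sets \<open>I \<subseteq> \<nat>\<close>;
  constraint \<open>r\<close> reads \<open>d\<^sub>r x\<^sup>q\<^sup>\<^sub>r \<sqsubset> c\<^sub>r x\<^sup>p\<^sup>\<^sub>r\<close>.\<close>

definition certificate ::
  "nat set \<Rightarrow> (nat \<Rightarrow> 'n \<Rightarrow> nat) \<Rightarrow> (nat \<Rightarrow> 'n \<Rightarrow> nat) \<Rightarrow> (nat \<Rightarrow> nat) \<Rightarrow> bool" where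
  "certificate I p q t \<longleftrightarrow>
     (\<exists>r\<in>I. t r \<noteq> 0) \<and> (\<forall>j. (\<Sum>r\<in>I. t r * p r j) = (\<Sum>r\<in>I. t r * q r j))"

definition combine :: "nat set \<Rightarrow> (nat \<Rightarrow> nat \<Rightarrow> nat) \<Rightarrow> (nat \<Rightarrow> 'n \<Rightarrow> nat) \<Rightarrow> nat \<Rightarrow> 'n \<Rightarrow> nat" where
  "combine I w f k j = (\<Sum>r\<in>I. w k r * f r j)"

lemma monom_combine: "finite I \<Longrightarrow> monom x (combine I w f k) = (\<Prod>r\<in>I. monom x (f r) ^ w k r)"
  using monom_combination[of I x "w k" f] by (simp add: combine_def[abs_def])

lemma sum_lift:
  "(\<Sum>r\<in>I. (\<Sum>k\<in>I'. t k * w k r) * f r j) = (\<Sum>k\<in>I'. t k * combine I w f k j)"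
proof -
  have "(\<Sum>r\<in>I. (\<Sum>k\<in>I'. t k * w k r) * f r j) = (\<Sum>r\<in>I. \<Sum>k\<in>I'. t k * (w k r * f r j))"
    by (simp add: sum_distrib_right mult.assoc)
  also have "\<dots> = (\<Sum>k\<in>I'. t k * combine I w f k j)"
    by (subst sum.swap) (simp add: combine_def sum_distrib_left)
  finally show ?thesis .
qed

lemma prod_lift:
  "(\<Prod>r\<in>I. c r ^ (\<Sum>k\<in>I'. t k * w k r)) = (\<Prod>k\<in>I'. (\<Prod>r\<in>I. c r ^ w k r) ^ t k)"
  for c :: "nat \<Rightarrow> 'a::comm_monoid_mult"
proof -
  have "(\<Prod>r\<in>I. c r ^ (\<Sum>k\<in>I'. t k * w k r)) = (\<Prod>r\<in>I. \<Prod>k\<in>I'. c r ^ (w k r * t k))"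
    by (simp add: power_sum mult.commute)
  also have "\<dots> = (\<Prod>k\<in>I'. (\<Prod>r\<in>I. c r ^ w k r) ^ t k)"
    by (subst prod.swap) (simp add: prod_power_distrib_monoid power_mult)
  finally show ?thesis .
qed

lemma certificate_lift:
  assumes "finite I'"
    and cert: "certificate I' (\<lambda>k. (combine I w p k)(i := 0)) (\<lambda>k. (combine I w q k)(i := 0)) t"
    and balanced: "\<forall>k\<in>I'. combine I w p k i = combine I w q k i"
    and nonzero: "\<forall>k\<in>I'. \<exists>r\<in>I. w k r \<noteq> 0"
  shows "certificate I p q (\<lambda>r. \<Sum>k\<in>I'. t k * w k r)"
  unfolding certificate_def
proof
  obtain k where k: "k \<in> I'" "t k \<noteq> 0" using cert unfolding certificate_def by blast
  obtain r where r: "r \<in> I" "w k r \<noteq> 0" using nonzero k(1) by blast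
  have "t k * w k r \<le> (\<Sum>k\<in>I'. t k * w k r)"
    using member_le_sum[of k I' "\<lambda>k. t k * w k r"] k(1) assms(1) by simp
  moreover have "t k * w k r > 0" using k r by simp
  ultimately show "\<exists>r\<in>I. (\<Sum>k\<in>I'. t k * w k r) \<noteq> 0" using r(1) by (intro bexI[OF _ r(1)]) linarith
  show "\<forall>j. (\<Sum>r\<in>I. (\<Sum>k\<in>I'. t k * w k r) * p r j) = (\<Sum>r\<in>I. (\<Sum>k\<in>I'. t k * w k r) * q r j)"
  proof
    fix j
    have "(\<Sum>k\<in>I'. t k * combine I w p k j) = (\<Sum>k\<in>I'. t k * combine I w q k j)"
    proof (cases "j = i")
      case True
      then show ?thesis using balanced by (intro sum.cong) auto
    next
      case False
      have "(\<Sum>k\<in>I'. t k * ((combine I w p k)(i := 0)) j) = (\<Sum>k\<in>I'. t k * ((combine I w q k)(i := 0)) j)"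
        using cert unfolding certificate_def by blast
      then show ?thesis using False by simp
    qed
    then show "(\<Sum>r\<in>I. (\<Sum>k\<in>I'. t k * w k r) * p r j) = (\<Sum>r\<in>I. (\<Sum>k\<in>I'. t k * w k r) * q r j)"
      by (simp only: sum_lift)
  qed
qed

context ordered_div_group
begin

definition feasible ::
  "nat set \<Rightarrow> (nat \<Rightarrow> 'n::finite \<Rightarrow> nat) \<Rightarrow> (nat \<Rightarrow> 'n \<Rightarrow> nat) \<Rightarrow> (nat \<Rightarrow> 'a) \<Rightarrow> (nat \<Rightarrow> 'a) \<Rightarrow> bool"
  where "feasible I p q c d \<longleftrightarrow>
    (\<exists>x. (\<forall>j. x j \<in> C) \<and> (\<forall>r\<in>I. d r * monom x (q r) \<sqsubset> c r * monom x (p r)))"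

definition fm_certified :: "nat set \<Rightarrow> (nat \<Rightarrow> 'n::finite \<Rightarrow> nat) \<Rightarrow> (nat \<Rightarrow> 'n \<Rightarrow> nat) \<Rightarrow> bool"
  where "fm_certified I p q \<longleftrightarrow> (\<exists>T. finite T \<and> (\<forall>t\<in>T. certificate I p q t) \<and>
     (\<forall>c d. (\<forall>r\<in>I. c r \<in> C \<and> d r \<in> C) \<longrightarrow>
        (feasible I p q c d \<longleftrightarrow> (\<forall>t\<in>T. (\<Prod>r\<in>I. d r ^ t r) \<sqsubset> (\<Prod>r\<in>I. c r ^ t r)))))"

lemma combined_constraint:
  assumes "finite I" "\<forall>r\<in>I. c r \<in> C \<and> d r \<in> C" "\<forall>j. x j \<in> C"
    and "\<forall>r\<in>I. d r * monom x (q r) \<sqsubset> c r * monom x (p r)" and "r0 \<in> I" "w k r0 > 0"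
  shows "(\<Prod>r\<in>I. d r ^ w k r) * monom x (combine I w q k)
    \<sqsubset> (\<Prod>r\<in>I. c r ^ w k r) * monom x (combine I w p k)"
proof -
  have "(\<Prod>r\<in>I. (d r * monom x (q r)) ^ w k r) \<sqsubset> (\<Prod>r\<in>I. (c r * monom x (p r)) ^ w k r)"
    by (rule prod_power_strict_mono) (use assms in \<open>auto intro: mult_mem monom_mem\<close>)
  then show ?thesis
    by (simp add: monom_combine[OF assms(1)] power_mult_distrib prod.distrib)
qed

text \<open>Base case: without variables, the unit vectors are the certificates.\<close>
lemma fm_certified_constant:
  assumes "finite I" "\<forall>r j. p r j = 0 \<and> q r j = 0"
  shows "fm_certified I p q"
proof -
  define unit :: "nat \<Rightarrow> nat \<Rightarrow> nat" where "unit r0 r = (if r = r0 then 1 else 0)" for r0 r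
  have prod_unit: "(\<Prod>r\<in>I. c r ^ unit r0 r) = c r0" if "r0 \<in> I" for c :: "nat \<Rightarrow> 'a" and r0
  proof -
    have "(\<Prod>r\<in>I. c r ^ unit r0 r) = (\<Prod>r\<in>I. if r = r0 then c r else 1)"
      by (rule prod.cong) (auto simp: unit_def)
    then show ?thesis using assms(1) that by simp
  qed
  have zero: "p r = (\<lambda>j. 0)" "q r = (\<lambda>j. 0)" for r using assms(2) by auto
  have "feasible I p q c d \<longleftrightarrow> (\<forall>t\<in>unit ` I. (\<Prod>r\<in>I. d r ^ t r) \<sqsubset> (\<Prod>r\<in>I. c r ^ t r))" for c d
  proof -
    have "feasible I p q c d \<longleftrightarrow> (\<forall>r\<in>I. d r \<sqsubset> c r)"
      unfolding feasible_def using one_mem by (auto simp: zero monom_zero)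
    then show ?thesis by (simp add: prod_unit)
  qed
  moreover have "\<forall>t\<in>unit ` I. certificate I p q t"
    by (auto simp: certificate_def zero unit_def)
  ultimately show ?thesis
    unfolding fm_certified_def using assms(1) by (intro exI[of _ "unit ` I"]) auto
qed

end

text \<open>Constraints
  are split by the sign of the net exponent of \<open>x\<^sub>i\<close>: in \<open>Lower\<close> they bound \<open>x\<^sub>i\<close> from
  below, in \<open>Upper\<close> from above, in \<open>Neutral\<close> \<open>x\<^sub>i\<close> cancels.  The eliminated system keeps
  the neutral constraints (new index \<open>2r\<close>) and adds, for each lower \<open>r\<close> and upper \<open>s\<close>, the
  combination in which \<open>x\<^sub>i\<close> cancels (new odd index coding the pair).\<close>

locale fm_elimination = ordered_div_group +
  fixes I :: "nat set" and p q :: "nat \<Rightarrow> 'n::finite \<Rightarrow> nat" and i :: 'n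
  assumes finite_I: "finite I"
begin

definition "Lower = {r\<in>I. q r i < p r i}"
definition "Upper = {r\<in>I. p r i < q r i}"
definition "Neutral = {r\<in>I. p r i = q r i}"

definition lower_gap :: "nat \<Rightarrow> nat" where "lower_gap r = p r i - q r i"
definition upper_gap :: "nat \<Rightarrow> nat" where "upper_gap s = q s i - p s i"

definition pair_code :: "nat \<Rightarrow> nat \<Rightarrow> nat" where
  "pair_code r s = Suc (2 * prod_encode (r, s))"

definition weights :: "nat \<Rightarrow> nat \<Rightarrow> nat" where
  "weights k r' = (if even k then (if r' = k div 2 then 1 else 0) else
     (case prod_decode (k div 2) of (r, s) \<Rightarrow>
        (if r' = r then upper_gap s else 0) + (if r' = s then lower_gap r else 0)))"

definition "I' = (\<lambda>r. 2 * r) ` Neutral \<union> (\<lambda>(r, s). pair_code r s) ` (Lower \<times> Upper)"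
definition "p' k = (combine I weights p k)(i := 0)"
definition "q' k = (combine I weights q k)(i := 0)"

definition combined_coeff :: "(nat \<Rightarrow> 'a) \<Rightarrow> nat \<Rightarrow> 'a" where
  "combined_coeff c k = (\<Prod>r\<in>I. c r ^ weights k r)"

definition reduced :: "(nat \<Rightarrow> 'n \<Rightarrow> nat) \<Rightarrow> ('n \<Rightarrow> 'a) \<Rightarrow> (nat \<Rightarrow> 'a) \<Rightarrow> nat \<Rightarrow> 'a" where
  "reduced f x c r = c r * monom x ((f r)(i := 0))"

lemma reduced_update: "c r * monom (x(i := z)) (f r) = reduced f x c r * z ^ f r i"
  by (simp add: reduced_def monom_update mult.assoc)

lemma reduced_mem: "c r \<in> C \<Longrightarrow> (\<And>j. x j \<in> C) \<Longrightarrow> reduced f x c r \<in> C"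
  unfolding reduced_def by (intro mult_mem monom_mem)

lemma finite_I': "finite I'"
  using finite_I by (simp add: I'_def Lower_def Upper_def Neutral_def)

lemma I_split: "I = Lower \<union> Upper \<union> Neutral"
  by (auto simp: Lower_def Upper_def Neutral_def)

lemma lower_upper_disjoint: "r \<in> Lower \<Longrightarrow> s \<in> Upper \<Longrightarrow> r \<noteq> s"
  by (auto simp: Lower_def Upper_def)

lemma I'_cases:
  assumes "k \<in> I'"
  obtains (neutral) r where "r \<in> Neutral" "k = 2 * r"
    | (pair) r s where "r \<in> Lower" "s \<in> Upper" "k = pair_code r s"
  using assms unfolding I'_def by auto

lemma weights_neutral: "weights (2 * r) r' = (if r' = r then 1 else 0)"
  by (simp add: weights_def)

lemma weights_pair:
  "weights (pair_code r s) r' = (if r' = r then upper_gap s else 0) + (if r' = s then lower_gap r else 0)"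
  by (simp add: weights_def pair_code_def)

lemma combine_neutral:
  assumes "r \<in> I"
  shows "combine I weights f (2 * r) = f r"
proof
  fix j
  have "combine I weights f (2 * r) j = (\<Sum>r'\<in>I. if r' = r then f r' j else 0)"
    unfolding combine_def by (rule sum.cong) (auto simp: weights_neutral)
  then show "combine I weights f (2 * r) j = f r j" using assms finite_I by simp
qed

lemma combine_pair:
  assumes "r \<in> Lower" "s \<in> Upper"
  shows "combine I weights f (pair_code r s) = (\<lambda>j. upper_gap s * f r j + lower_gap r * f s j)"
proof
  fix j
  have rs: "r \<in> I" "s \<in> I" "r \<noteq> s"
    using assms lower_upper_disjoint by (auto simp: Lower_def Upper_def)
  have "combine I weights f (pair_code r s) j
      = (\<Sum>r'\<in>I. if r' = r then upper_gap s * f r' j else 0)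
        + (\<Sum>r'\<in>I. if r' = s then lower_gap r * f r' j else 0)"
    unfolding combine_def sum.distrib[symmetric]
    by (rule sum.cong) (auto simp: weights_pair distrib_right)
  then show "combine I weights f (pair_code r s) j = upper_gap s * f r j + lower_gap r * f s j"
    using rs finite_I by simp
qed

lemma prod_weights_neutral:
  fixes c :: "nat \<Rightarrow> 'b::comm_monoid_mult"
  assumes "r \<in> I"
  shows "(\<Prod>r'\<in>I. c r' ^ weights (2 * r) r') = c r"
proof -
  have "(\<Prod>r'\<in>I. c r' ^ weights (2 * r) r') = (\<Prod>r'\<in>I. if r' = r then c r' else 1)"
    by (rule prod.cong) (auto simp: weights_neutral)
  then show ?thesis using assms finite_I by simp
qed

lemma prod_weights_pair:
  fixes c :: "nat \<Rightarrow> 'b::comm_monoid_mult"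
  assumes "r \<in> Lower" "s \<in> Upper"
  shows "(\<Prod>r'\<in>I. c r' ^ weights (pair_code r s) r') = c r ^ upper_gap s * c s ^ lower_gap r"
proof -
  have rs: "r \<in> I" "s \<in> I" "r \<noteq> s"
    using assms lower_upper_disjoint by (auto simp: Lower_def Upper_def)
  have "(\<Prod>r'\<in>I. c r' ^ weights (pair_code r s) r')
      = (\<Prod>r'\<in>I. if r' = r then c r' ^ upper_gap s else 1)
        * (\<Prod>r'\<in>I. if r' = s then c r' ^ lower_gap r else 1)"
    unfolding prod.distrib[symmetric]
    by (rule prod.cong) (auto simp: weights_pair power_add)
  then show ?thesis using rs finite_I by simp
qed

lemma weights_nonzero:
  assumes "k \<in> I'"
  shows "\<exists>r\<in>I. weights k r \<noteq> 0"
  using assms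
proof (cases rule: I'_cases)
  case (neutral r)
  then show ?thesis by (auto simp: weights_neutral Neutral_def)
next
  case (pair r s)
  then show ?thesis
    using lower_upper_disjoint[of r s]
    by (intro bexI[of _ r]) (auto simp: weights_pair upper_gap_def Upper_def Lower_def)
qed

lemma combine_balanced:
  assumes "k \<in> I'"
  shows "combine I weights p k i = combine I weights q k i"
  using assms
proof (cases rule: I'_cases)
  case (neutral r)
  then show ?thesis by (auto simp: combine_neutral Neutral_def)
next
  case (pair r s)
  then have "p r i = q r i + lower_gap r" "q s i = p s i + upper_gap s"
    by (auto simp: lower_gap_def upper_gap_def Lower_def Upper_def)
  then show ?thesis using pair by (simp add: combine_pair algebra_simps)
qed

lemma eliminated_support:
  assumes "\<forall>r j. j \<notin> insert i D \<longrightarrow> p r j = 0 \<and> q r j = 0"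
  shows "\<forall>k j. j \<notin> D \<longrightarrow> p' k j = 0 \<and> q' k j = 0"
  using assms by (auto simp: p'_def q'_def combine_def)

lemma feasible_eliminated:
  assumes C: "\<forall>r\<in>I. c r \<in> C \<and> d r \<in> C" and "feasible I p q c d"
  shows "feasible I' p' q' (combined_coeff c) (combined_coeff d)"
proof -
  obtain x where x: "\<forall>j. x j \<in> C" "\<forall>r\<in>I. d r * monom x (q r) \<sqsubset> c r * monom x (p r)"
    using assms(2) unfolding feasible_def by blast
  have "combined_coeff d k * monom x (q' k) \<sqsubset> combined_coeff c k * monom x (p' k)"
    if k: "k \<in> I'" for k
  proof -
    define e where "e = combine I weights p k i"
    obtain r0 where "r0 \<in> I" "weights k r0 > 0" using weights_nonzero[OF k] by auto
    then have "combined_coeff d k * monom x (combine I weights q k)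
        \<sqsubset> combined_coeff c k * monom x (combine I weights p k)"
      unfolding combined_coeff_def by (rule combined_constraint[OF finite_I C x])
    moreover have "monom x (combine I weights p k) = monom x (p' k) * x i ^ e"
      unfolding p'_def e_def by (rule monom_split)
    moreover have "monom x (combine I weights q k) = monom x (q' k) * x i ^ e"
      unfolding q'_def e_def combine_balanced[OF k] by (rule monom_split)
    ultimately have "(combined_coeff d k * monom x (q' k)) * x i ^ e
        \<sqsubset> (combined_coeff c k * monom x (p' k)) * x i ^ e"
      by (simp add: mult.assoc)
    moreover have "combined_coeff d k * monom x (q' k) \<in> C"
      "combined_coeff c k * monom x (p' k) \<in> C" "x i ^ e \<in> C"
      using x(1) C by (auto simp: combined_coeff_def intro!: mult_mem prod_mem power_mem monom_mem)
    ultimately show ?thesis using mult_right_cancel by blast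
  qed
  then show ?thesis using x(1) unfolding feasible_def by blast
qed

text \<open>What a solution \<open>x\<close> of the eliminated system says about the reduced sides of the
  original constraints: the neutral ones hold, and for each lower \<open>r\<close> and upper \<open>s\<close> the
  compatibility condition needed by the separation lemma holds.\<close>
lemma eliminated_neutral:
  assumes r: "r \<in> Neutral"
    and sol: "combined_coeff d (2 * r) * monom x (q' (2 * r))
      \<sqsubset> combined_coeff c (2 * r) * monom x (p' (2 * r))"
  shows "reduced q x d r \<sqsubset> reduced p x c r"
proof -
  have rI: "r \<in> I" using r by (simp add: Neutral_def)
  show ?thesis
    using sol by (simp add: combined_coeff_def prod_weights_neutral[OF rI] p'_def q'_def
        combine_neutral[OF rI] reduced_def)
qed

lemma eliminated_pair:
  assumes rs: "r \<in> Lower" "s \<in> Upper"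
    and sol: "combined_coeff d (pair_code r s) * monom x (q' (pair_code r s))
      \<sqsubset> combined_coeff c (pair_code r s) * monom x (p' (pair_code r s))"
  shows "reduced q x d r ^ upper_gap s * reduced q x d s ^ lower_gap r
    \<sqsubset> reduced p x c r ^ upper_gap s * reduced p x c s ^ lower_gap r"
proof -
  have "(combine I weights f (pair_code r s))(i := 0)
      = (\<lambda>j. upper_gap s * ((f r)(i := 0)) j + lower_gap r * ((f s)(i := 0)) j)" for f
    by (simp add: combine_pair[OF rs] fun_eq_iff)
  then have "monom x (f' (pair_code r s))
      = monom x ((f r)(i := 0)) ^ upper_gap s * monom x ((f s)(i := 0)) ^ lower_gap r"
    if "f' = (\<lambda>k. (combine I weights f k)(i := 0))" for f f'
    unfolding that by (simp only: monom_add monom_scale)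
  then have "monom x (p' (pair_code r s))
      = monom x ((p r)(i := 0)) ^ upper_gap s * monom x ((p s)(i := 0)) ^ lower_gap r"
    "monom x (q' (pair_code r s))
      = monom x ((q r)(i := 0)) ^ upper_gap s * monom x ((q s)(i := 0)) ^ lower_gap r"
    by (simp_all add: p'_def[abs_def] q'_def[abs_def])
  moreover have "combined_coeff c (pair_code r s) = c r ^ upper_gap s * c s ^ lower_gap r" for c
    unfolding combined_coeff_def by (rule prod_weights_pair[OF rs])
  ultimately show ?thesis
    using sol by (simp add: reduced_def power_mult_distrib mult_ac)
qed

lemma extended_constraint:
  assumes r: "r \<in> I" and C: "\<alpha> \<in> C" "\<beta> \<in> C" "z \<in> C"
    and neutral: "r \<in> Neutral \<Longrightarrow> \<alpha> \<sqsubset> \<beta>"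
    and lower: "r \<in> Lower \<Longrightarrow> \<alpha> \<sqsubset> \<beta> * z ^ lower_gap r"
    and upper: "r \<in> Upper \<Longrightarrow> \<alpha> * z ^ upper_gap r \<sqsubset> \<beta>"
  shows "\<alpha> * z ^ q r i \<sqsubset> \<beta> * z ^ p r i"
proof -
  have zpow: "z ^ n \<in> C" for n using C(3) power_mem by blast
  consider "r \<in> Lower" | "r \<in> Upper" | "r \<in> Neutral" using r I_split by blast
  then show ?thesis
  proof cases
    case 1
    then have "\<alpha> * z ^ q r i \<sqsubset> (\<beta> * z ^ lower_gap r) * z ^ q r i"
      using lower C zpow mult_mem by (intro mult_right_mono) auto
    moreover have "p r i = lower_gap r + q r i" using 1 by (simp add: lower_gap_def Lower_def)
    ultimately show ?thesis by (simp add: power_add mult.assoc)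
  next
    case 2
    then have "(\<alpha> * z ^ upper_gap r) * z ^ p r i \<sqsubset> \<beta> * z ^ p r i"
      using upper C zpow mult_mem by (intro mult_right_mono) auto
    moreover have "q r i = upper_gap r + p r i" using 2 by (simp add: upper_gap_def Upper_def)
    ultimately show ?thesis by (simp add: power_add mult.assoc)
  next
    case 3
    then have "\<alpha> * z ^ q r i \<sqsubset> \<beta> * z ^ q r i" using neutral C zpow mult_right_mono by blast
    then show ?thesis using 3 by (simp add: Neutral_def)
  qed
qed

text \<open>Conversely, a solution of the eliminated system extends to the original one by a
  value of \<open>x\<^sub>i\<close> chosen with the separation lemma.\<close>
lemma feasible_from_eliminated:
  assumes C: "\<forall>r\<in>I. c r \<in> C \<and> d r \<in> C"
    and "feasible I' p' q' (combined_coeff c) (combined_coeff d)"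
  shows "feasible I p q c d"
proof -
  obtain x where x: "\<forall>j. x j \<in> C"
    and sol: "\<forall>k\<in>I'. combined_coeff d k * monom x (q' k) \<sqsubset> combined_coeff c k * monom x (p' k)"
    using assms(2) unfolding feasible_def by blast
  define \<alpha> where "\<alpha> = reduced q x d"
  define \<beta> where "\<beta> = reduced p x c"
  have \<alpha>\<beta>: "\<alpha> r \<in> C \<and> \<beta> r \<in> C" if "r \<in> I" for r
    using that C x by (simp add: \<alpha>_def \<beta>_def reduced_mem)
  have "pair_code r s \<in> I'" if "r \<in> Lower" "s \<in> Upper" for r s
    using that by (force simp: I'_def)
  then have "\<forall>r\<in>Lower. \<forall>s\<in>Upper. \<alpha> r ^ upper_gap s * \<alpha> s ^ lower_gap r
      \<sqsubset> \<beta> r ^ upper_gap s * \<beta> s ^ lower_gap r"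
    using sol eliminated_pair by (simp add: \<alpha>_def \<beta>_def)
  moreover have "finite Lower" "finite Upper" using finite_I by (auto simp: Lower_def Upper_def)
  moreover have "\<forall>r\<in>Lower. lower_gap r > 0 \<and> \<alpha> r \<in> C \<and> \<beta> r \<in> C"
    "\<forall>s\<in>Upper. upper_gap s > 0 \<and> \<alpha> s \<in> C \<and> \<beta> s \<in> C"
    using \<alpha>\<beta> by (auto simp: Lower_def Upper_def lower_gap_def upper_gap_def)
  ultimately obtain z where z: "z \<in> C"
    and zL: "\<forall>r\<in>Lower. \<alpha> r \<sqsubset> \<beta> r * z ^ lower_gap r"
    and zU: "\<forall>s\<in>Upper. \<alpha> s * z ^ upper_gap s \<sqsubset> \<beta> s"
    using separation[of Lower Upper lower_gap \<alpha> \<beta> upper_gap] by blast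
  have "\<alpha> r \<sqsubset> \<beta> r" if "r \<in> Neutral" for r
    using that sol eliminated_neutral by (force simp: \<alpha>_def \<beta>_def I'_def)
  then have "\<alpha> r * z ^ q r i \<sqsubset> \<beta> r * z ^ p r i" if "r \<in> I" for r
    using extended_constraint[OF that] \<alpha>\<beta>[OF that] z zL zU by blast
  then show ?thesis
    using x z unfolding feasible_def \<alpha>_def \<beta>_def reduced_update[symmetric]
    by (intro exI[of _ "x(i := z)"]) auto
qed

lemma fm_certified_step:
  assumes "fm_certified I' p' q'"
  shows "fm_certified I p q"
proof -
  obtain T' where T': "finite T'" "\<forall>t\<in>T'. certificate I' p' q' t"
    and decide: "\<forall>c d. (\<forall>k\<in>I'. c k \<in> C \<and> d k \<in> C) \<longrightarrow>
        (feasible I' p' q' c d \<longleftrightarrow> (\<forall>t\<in>T'. (\<Prod>k\<in>I'. d k ^ t k) \<sqsubset> (\<Prod>k\<in>I'. c k ^ t k)))"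
    using assms unfolding fm_certified_def by blast
  define lift where "lift t r = (\<Sum>k\<in>I'. t k * weights k r)" for t r
  have "feasible I p q c d \<longleftrightarrow> (\<forall>t\<in>lift ` T'. (\<Prod>r\<in>I. d r ^ t r) \<sqsubset> (\<Prod>r\<in>I. c r ^ t r))"
    if C: "\<forall>r\<in>I. c r \<in> C \<and> d r \<in> C" for c d
  proof -
    have "\<forall>k\<in>I'. (\<Prod>r\<in>I. c r ^ weights k r) \<in> C \<and> (\<Prod>r\<in>I. d r ^ weights k r) \<in> C"
      using C by (auto intro!: prod_mem power_mem)
    then have "feasible I' p' q' (combined_coeff c) (combined_coeff d)
        \<longleftrightarrow> (\<forall>t\<in>T'. (\<Prod>r\<in>I. d r ^ lift t r) \<sqsubset> (\<Prod>r\<in>I. c r ^ lift t r))"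
      using decide by (simp add: lift_def prod_lift combined_coeff_def)
    then show ?thesis
      using feasible_eliminated[OF C] feasible_from_eliminated[OF C] by auto
  qed
  moreover have "\<forall>t\<in>lift ` T'. certificate I p q t"
    using T'(2) finite_I' weights_nonzero combine_balanced
    unfolding lift_def p'_def q'_def by (auto intro!: certificate_lift)
  ultimately show ?thesis
    unfolding fm_certified_def using T'(1) by (intro exI[of _ "lift ` T'"]) auto
qed

end

context ordered_div_group
begin

lemma fm_certified_support:
  "finite D \<Longrightarrow> finite I \<Longrightarrow> \<forall>r j. j \<notin> D \<longrightarrow> p r j = 0 \<and> q r j = 0 \<Longrightarrow> fm_certified I p q"
proof (induction D arbitrary: I p q rule: finite_induct)
  case empty
  then show ?case using fm_certified_constant by blast
next
  case (insert i D)
  interpret E: fm_elimination C less I p q i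
    by (rule fm_elimination.intro[OF ordered_div_group_axioms]) (unfold_locales, fact)
  show ?case
    using E.fm_certified_step insert.IH[OF E.finite_I'] E.eliminated_support insert.prems(2)
    by blast
qed

theorem fourier_motzkin: "finite I \<Longrightarrow> fm_certified I (p :: nat \<Rightarrow> 'n::finite \<Rightarrow> nat) q"
  using fm_certified_support[of UNIV] by simp

end

lemma qf_add_idem: "(a::'a::qfield1) + a = a"
proof -
  have "a + a = a * (1 + 1)" by (simp only: distrib_left mult_1_right)
  then show ?thesis by (simp only: one_plus_one_qf mult_1_right)
qed

lemma qf_refl: "qf_le (a::'a::qfield1) a"
  by (simp add: qf_le_def qf_add_idem)

lemma qf_antisym: "qf_le (a::'a::qfield1) b \<Longrightarrow> qf_le b a \<Longrightarrow> a = b"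
  by (simp add: qf_le_def add.commute)

lemma qf_trans: "qf_le (a::'a::qfield1) b \<Longrightarrow> qf_le b c \<Longrightarrow> qf_le a c"
  unfolding qf_le_def by (metis add.assoc)

lemma qf_zero_le: "qf_le 0 (a::'a::qfield1)"
  by (simp add: qf_le_def)

lemma qf_le_zero: "qf_le (a::'a::qfield1) 0 \<Longrightarrow> a = 0"
  by (simp add: qf_le_def)

lemma qf_le_add1: "qf_le (a::'a::qfield1) (a + b)"
  unfolding qf_le_def by (simp add: add.assoc[symmetric] qf_add_idem)

lemma qf_le_add2: "qf_le (b::'a::qfield1) (a + b)"
  using qf_le_add1[of b a] by (simp add: add.commute)

lemma qf_add_le: "qf_le (a::'a::qfield1) c \<Longrightarrow> qf_le b c \<Longrightarrow> qf_le (a + b) c"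
  unfolding qf_le_def by (metis add.assoc)

lemma qf_mult_right_mono: "qf_le (a::'a::qfield1) b \<Longrightarrow> qf_le (a * c) (b * c)"
  unfolding qf_le_def by (simp add: distrib_right[symmetric])

lemma qf_mult_mono: "qf_le (a::'a::qfield1) b \<Longrightarrow> qf_le c d \<Longrightarrow> qf_le (a * c) (b * d)"
  by (metis mult.commute qf_mult_right_mono qf_trans)

lemma qf_power_mono: "qf_le (a::'a::qfield1) b \<Longrightarrow> qf_le (a ^ n) (b ^ n)"
  by (induction n) (auto simp: qf_refl qf_mult_mono)

lemma qf_prod_mono:
  "(\<And>x. x \<in> A \<Longrightarrow> qf_le (f x) (g x :: 'a::qfield1)) \<Longrightarrow> qf_le (prod f A) (prod g A)"
  by (induction A rule: infinite_finite_induct) (auto simp: qf_refl qf_mult_mono)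

lemma qf_sum_le:
  "finite S \<Longrightarrow> (\<And>s. s \<in> S \<Longrightarrow> qf_le (f s) (z::'a::qfield1)) \<Longrightarrow> qf_le (sum f S) z"
  by (induction S rule: finite_induct) (auto simp: qf_zero_le qf_add_le)

lemma qf_le_sum: "finite S \<Longrightarrow> s \<in> S \<Longrightarrow> qf_le (f s) (sum f S :: 'a::qfield1)"
proof (induction S rule: finite_induct)
  case (insert x F)
  then show ?case
    using qf_le_add1[of "f x"] qf_le_add2[of "sum f F" "f x"] qf_trans[of "f s" "sum f F"] by auto
qed simp

lemma qf_inverse: "(a::'a::qfield1) \<noteq> 0 \<Longrightarrow> \<exists>b. b \<noteq> 0 \<and> a * b = 1"
  by (metis mult_inv_ex_qf mult_zero_right zero_neq_one)

lemma qf_mult_nonzero: "(a::'a::qfield1) \<noteq> 0 \<Longrightarrow> b \<noteq> 0 \<Longrightarrow> a * b \<noteq> 0"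
  by (metis mult.assoc mult.commute mult_1 mult_inv_ex_qf mult_zero_right)

lemma qf_mult_right_cancel: "(c::'a::qfield1) \<noteq> 0 \<Longrightarrow> a * c = b * c \<Longrightarrow> a = b"
  by (metis mult.assoc mult_1_right mult_inv_ex_qf)

lemma qf_power_nonzero: "(a::'a::qfield1) \<noteq> 0 \<Longrightarrow> a ^ n \<noteq> 0"
  by (induction n) (auto simp: qf_mult_nonzero)

lemma qf_prod_nonzero: "(\<And>x. x \<in> A \<Longrightarrow> f x \<noteq> (0::'a::qfield1)) \<Longrightarrow> prod f A \<noteq> 0"
  by (induction A rule: infinite_finite_induct) (auto simp: qf_mult_nonzero)

lemma monom_nonzero: "(\<And>j. x j \<noteq> 0) \<Longrightarrow> monom x f \<noteq> (0::'a::qfield1)"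
  unfolding monom_def by (rule qf_prod_nonzero) (simp add: qf_power_nonzero)

definition qf_less :: "'a::qfield1 \<Rightarrow> 'a \<Rightarrow> bool" where
  "qf_less a b \<longleftrightarrow> qf_le a b \<and> a \<noteq> b"

lemma qf_not_le: "qf_total TYPE('a::qfield1) \<Longrightarrow> \<not> qf_le (a::'a) b \<Longrightarrow> qf_less b a"
  unfolding qf_total_def qf_less_def using qf_refl by blast

lemma qf_sum_attained:
  assumes "qf_total TYPE('a::qfield1)"
  shows "finite S \<Longrightarrow> S \<noteq> {} \<Longrightarrow> \<exists>s\<in>S. sum f S = (f s :: 'a)"
proof (induction S rule: finite_ne_induct)
  case (insert x F)
  then obtain s where s: "s \<in> F" "sum f F = f s" by auto
  have "f x + f s = f s \<or> f x + f s = f x"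
    using assms unfolding qf_total_def qf_le_def by (metis add.commute)
  then show ?case using insert s by auto
qed simp

text \<open>Algebraic closedness gives \<open>n\<close>-th roots: a root of \<open>X\<^sup>n + a\<close> is a point where
  \<open>x\<^sup>n = a\<close>, since the polynomial cannot vanish.\<close>
lemma qf_root:
  assumes "qf_alg_closed TYPE('a::qfield1)" and a: "(a::'a) \<noteq> 0" and n: "n > 0"
  shows "\<exists>r. r \<noteq> 0 \<and> r ^ n = a"
proof -
  define p where "p k = (if k = n then 1 else if k = 0 then a else 0)" for k
  have S: "{k. p k \<noteq> 0} = {0, n}" using a n by (auto simp: p_def)
  then obtain x where x: "upoly_root p x"
    using assms(1) n unfolding qf_alg_closed_def by (metis finite.emptyI finite_insert p_def zero_neq_one)
  have ev: "upoly_eval p x = a + x ^ n" using n unfolding upoly_eval_def S by (simp add: p_def)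
  have "x ^ n = a"
  proof (cases "upoly_eval p x = 0")
    case True
    then have "qf_le a 0" using ev qf_le_add1[of a "x ^ n"] by simp
    then show ?thesis using qf_le_zero a by blast
  next
    case False
    then obtain k1 k2 where k: "k1 \<noteq> k2" "p k1 \<noteq> 0" "p k2 \<noteq> 0"
      "p k1 * x ^ k1 = upoly_eval p x" "p k2 * x ^ k2 = upoly_eval p x"
      using x unfolding upoly_root_def by blast
    then have "k1 \<in> {0, n}" "k2 \<in> {0, n}" using S by auto
    then have "{k1, k2} = {0, n}" using k(1) by auto
    then have "p 0 * x ^ 0 = p n * x ^ n" using k by (metis doubleton_eq_iff)
    then show ?thesis using n by (simp add: p_def)
  qed
  then show ?thesis using a n by (metis power_0_left not_gr0)
qed

lemma qfield_ordered_div_group: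
  assumes total: "qf_total TYPE('a::qfield1)" and closed: "qf_alg_closed TYPE('a)"
    and infinite: "infinite (UNIV :: 'a set)"
  shows "ordered_div_group {x::'a. x \<noteq> 0} qf_less"
proof
  fix a b c :: 'a
  show "qf_less a b \<Longrightarrow> qf_less b c \<Longrightarrow> qf_less a c"
    unfolding qf_less_def using qf_trans qf_antisym by blast
  show "a \<in> {x. x \<noteq> 0} \<Longrightarrow> b \<in> {x. x \<noteq> 0} \<Longrightarrow> a \<noteq> b \<Longrightarrow> qf_less a b \<or> qf_less b a"
    using total unfolding qf_total_def qf_less_def by blast
  show "c \<in> {x. x \<noteq> 0} \<Longrightarrow> qf_less a b \<Longrightarrow> qf_less (a * c) (b * c)"
    unfolding qf_less_def using qf_mult_right_mono qf_mult_right_cancel by blast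
next
  have "UNIV \<noteq> {0, 1::'a}" using infinite by (metis finite.emptyI finite_insert)
  then obtain g :: 'a where g: "g \<noteq> 0" "g \<noteq> 1" by blast
  obtain h where h: "h \<noteq> 0" "g * h = 1" using qf_inverse[OF g(1)] by blast
  have "qf_le 1 g \<or> qf_le 1 h"
    using total qf_mult_right_mono[of g 1 h] h(2) unfolding qf_total_def by (metis mult_1)
  moreover have "h \<noteq> 1" using h g by auto
  ultimately show "\<exists>g\<in>{x::'a. x \<noteq> 0}. qf_less 1 g"
    using g h unfolding qf_less_def by blast
qed (auto simp: qf_mult_nonzero qf_inverse qf_less_def dest: qf_root[OF closed])

lemma real_ordered_div_group: "ordered_div_group {x::real. x > 0} (<)"
proof
  show "\<And>a. a \<in> {x::real. x > 0} \<Longrightarrow> \<exists>b\<in>{x. x > 0}. a * b = 1"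
    by (intro bexI[of _ "1 / _"]) auto
  fix a :: real and n :: nat
  assume "a \<in> {x. x > 0}" "0 < n"
  then show "\<exists>r\<in>{x. x > 0}. r ^ n = a"
    by (intro bexI[of _ "root n a"]) (auto simp: real_root_pow_pos)
next
  show "\<exists>g\<in>{x::real. x > 0}. 1 < g" by (intro bexI[of _ 2]) auto
qed auto

text \<open>Rational convex combinations: integer weights \<open>c\<close> on \<open>S\<close> with positive total
  \<open>m = \<Sum> c\<close> and \<open>\<Sum> c\<^sub>\<alpha> \<alpha> = m \<gamma>\<close>, i.e. \<open>\<gamma> = \<Sum> (c\<^sub>\<alpha>/m) \<alpha>\<close>.  The coefficients of the
  convex hull are the maxima of \<open>(\<Prod> \<lambda>\<^sub>\<alpha>\<^sup>c\<^sup>\<^sub>\<alpha>)\<^sup>1\<^sup>/\<^sup>m\<close> over such weights.\<close>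
definition hull_weights :: "('n \<Rightarrow> nat) set \<Rightarrow> ('n \<Rightarrow> nat) \<Rightarrow> (('n \<Rightarrow> nat) \<Rightarrow> nat) \<Rightarrow> bool" where
  "hull_weights S \<gamma> c \<longleftrightarrow>
     (\<Sum>\<alpha>\<in>S. c \<alpha>) \<ge> 1 \<and> (\<forall>i. (\<Sum>\<alpha>\<in>S. c \<alpha> * \<alpha> i) = (\<Sum>\<alpha>\<in>S. c \<alpha>) * \<gamma> i)"

lemma conv_cands_iff:
  "y \<in> conv_cands P \<gamma> \<longleftrightarrow> (\<exists>c. hull_weights (supp_poly P) \<gamma> c \<and>
     y ^ (\<Sum>\<alpha>\<in>supp_poly P. c \<alpha>) = (\<Prod>\<alpha>\<in>supp_poly P. P \<alpha> ^ c \<alpha>))"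
proof
  assume "y \<in> conv_cands P \<gamma>"
  then obtain m c where "m \<ge> 1" "(\<Sum>\<alpha>\<in>supp_poly P. c \<alpha>) = m"
    "\<forall>i. (\<Sum>\<alpha>\<in>supp_poly P. c \<alpha> * \<alpha> i) = m * \<gamma> i"
    "y ^ m = (\<Prod>\<alpha>\<in>supp_poly P. P \<alpha> ^ c \<alpha>)"
    unfolding conv_cands_def by blast
  then show "\<exists>c. hull_weights (supp_poly P) \<gamma> c \<and>
     y ^ (\<Sum>\<alpha>\<in>supp_poly P. c \<alpha>) = (\<Prod>\<alpha>\<in>supp_poly P. P \<alpha> ^ c \<alpha>)"
    unfolding hull_weights_def by blast
next
  assume "\<exists>c. hull_weights (supp_poly P) \<gamma> c \<and>
     y ^ (\<Sum>\<alpha>\<in>supp_poly P. c \<alpha>) = (\<Prod>\<alpha>\<in>supp_poly P. P \<alpha> ^ c \<alpha>)"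
  then show "y \<in> conv_cands P \<gamma>"
    unfolding conv_cands_def hull_weights_def by blast
qed

lemma prod_monomials_hull_weights:
  fixes x :: "'n::finite \<Rightarrow> 'a::comm_monoid_mult"
  assumes "finite S" "hull_weights S \<gamma> c"
  shows "(\<Prod>\<alpha>\<in>S. (a \<alpha> * monom x \<alpha>) ^ c \<alpha>) = (\<Prod>\<alpha>\<in>S. a \<alpha> ^ c \<alpha>) * monom x \<gamma> ^ (\<Sum>\<alpha>\<in>S. c \<alpha>)"
proof -
  have "(\<Prod>\<alpha>\<in>S. monom x \<alpha> ^ c \<alpha>) = monom x (\<lambda>j. \<Sum>\<alpha>\<in>S. c \<alpha> * \<alpha> j)"
    using monom_combination[OF assms(1), of x c "\<lambda>\<alpha>. \<alpha>"] by simp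
  also have "\<dots> = monom x \<gamma> ^ (\<Sum>\<alpha>\<in>S. c \<alpha>)"
    using assms(2) by (simp add: hull_weights_def monom_scale)
  finally show ?thesis by (simp add: power_mult_distrib prod.distrib)
qed

lemma hull_weights_in_hull:
  assumes "finite S" "hull_weights S \<gamma> c"
  shows "exp_to_real \<gamma> \<in> convex hull (exp_to_real ` S)"
proof -
  define m where "m = (\<Sum>\<alpha>\<in>S. c \<alpha>)"
  have m: "m \<ge> 1" "\<forall>i. (\<Sum>\<alpha>\<in>S. c \<alpha> * \<alpha> i) = m * \<gamma> i"
    using assms(2) by (simp_all add: hull_weights_def m_def)
  have "(\<Sum>\<alpha>\<in>S. (real (c \<alpha>) / real m) *\<^sub>R exp_to_real \<alpha>) \<in> convex hull (exp_to_real ` S)"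
  proof (rule convex_sum[OF assms(1) convex_convex_hull])
    have "(\<Sum>\<alpha>\<in>S. real (c \<alpha>) / real m) = real m / real m"
      by (simp add: m_def sum_divide_distrib[symmetric])
    then show "(\<Sum>\<alpha>\<in>S. real (c \<alpha>) / real m) = 1" using m(1) by simp
    show "\<And>\<alpha>. \<alpha> \<in> S \<Longrightarrow> 0 \<le> real (c \<alpha>) / real m" by simp
    show "\<And>\<alpha>. \<alpha> \<in> S \<Longrightarrow> exp_to_real \<alpha> \<in> convex hull (exp_to_real ` S)"
      by (simp add: hull_inc)
  qed
  moreover have "(\<Sum>\<alpha>\<in>S. (real (c \<alpha>) / real m) *\<^sub>R exp_to_real \<alpha>) = exp_to_real \<gamma>"
  proof (rule vec_eq_iff[THEN iffD2], rule allI)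
    fix i
    have "(\<Sum>\<alpha>\<in>S. (real (c \<alpha>) / real m) *\<^sub>R exp_to_real \<alpha>) $ i
        = (\<Sum>\<alpha>\<in>S. real (c \<alpha> * \<alpha> i)) / real m"
      by (simp add: exp_to_real_def sum_divide_distrib)
    also have "\<dots> = real (m * \<gamma> i) / real m" using m(2) by (simp only: of_nat_sum[symmetric])
    also have "\<dots> = exp_to_real \<gamma> $ i" using m(1) by (simp add: exp_to_real_def)
    finally show "(\<Sum>\<alpha>\<in>S. (real (c \<alpha>) / real m) *\<^sub>R exp_to_real \<alpha>) $ i = exp_to_real \<gamma> $ i" .
  qed
  ultimately show ?thesis by simp
qed

lemma sum_to_nat_image: "(\<Sum>r\<in>to_nat ` S. g r) = (\<Sum>\<alpha>\<in>S. g (to_nat \<alpha>))"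
  for S :: "'b::countable set"
  by (simp add: sum.reindex[OF inj_on_subset[OF inj_to_nat subset_UNIV]])

text \<open>Index the monomial system \<open>x\<^sup>\<alpha> \<sqsubset> x\<^sup>\<gamma>\<close> (\<open>\<alpha> \<in> S\<close>) by the codes of the exponent vectors:
  its certificates are exactly hull weights for \<open>\<gamma>\<close>.\<close>
lemma certificate_hull_weights:
  fixes S :: "('n::finite \<Rightarrow> nat) set"
  assumes "finite S" and cert: "certificate (to_nat ` S) (\<lambda>k. \<gamma>) from_nat t"
  shows "hull_weights S \<gamma> (\<lambda>\<alpha>. t (to_nat \<alpha>))"
proof -
  obtain \<alpha> where \<alpha>: "\<alpha> \<in> S" "t (to_nat \<alpha>) \<noteq> 0"
    using cert unfolding certificate_def by blast
  have "t (to_nat \<alpha>) \<le> (\<Sum>\<alpha>\<in>S. t (to_nat \<alpha>))"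
    by (rule member_le_sum) (use \<alpha> assms(1) in auto)
  then have "(\<Sum>\<alpha>\<in>S. t (to_nat \<alpha>)) \<ge> 1" using \<alpha>(2) by linarith
  moreover have "(\<Sum>\<alpha>\<in>S. t (to_nat \<alpha>) * \<alpha> j) = (\<Sum>\<alpha>\<in>S. t (to_nat \<alpha>)) * \<gamma> j" for j
  proof -
    have "(\<Sum>\<alpha>\<in>S. t (to_nat \<alpha>)) * \<gamma> j = (\<Sum>r\<in>to_nat ` S. t r * \<gamma> j)"
      by (simp add: sum_to_nat_image sum_distrib_right)
    also have "\<dots> = (\<Sum>r\<in>to_nat ` S. t r * from_nat r j)"
      using cert unfolding certificate_def by blast
    also have "\<dots> = (\<Sum>\<alpha>\<in>S. t (to_nat \<alpha>) * \<alpha> j)" by (simp add: sum_to_nat_image)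
    finally show ?thesis by simp
  qed
  ultimately show ?thesis by (simp add: hull_weights_def)
qed

context ordered_div_group
begin

lemma monomial_domination:
  fixes S :: "('n::finite \<Rightarrow> nat) set" and \<gamma> :: "'n \<Rightarrow> nat"
  assumes "finite S"
  shows "\<exists>T. finite T \<and> (\<forall>c\<in>T. hull_weights S \<gamma> c) \<and>
    (\<forall>a y. (\<forall>\<alpha>\<in>S. a \<alpha> \<in> C) \<longrightarrow> y \<in> C \<longrightarrow>
      ((\<exists>x. (\<forall>j. x j \<in> C) \<and> (\<forall>\<alpha>\<in>S. a \<alpha> * monom x \<alpha> \<sqsubset> y * monom x \<gamma>))
        \<longleftrightarrow> (\<forall>c\<in>T. (\<Prod>\<alpha>\<in>S. a \<alpha> ^ c \<alpha>) \<sqsubset> y ^ (\<Sum>\<alpha>\<in>S. c \<alpha>))))"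
proof -
  define I where "I = to_nat ` S"
  have "finite I" using assms by (simp add: I_def)
  then obtain T where T: "finite T" "\<forall>t\<in>T. certificate I (\<lambda>k. \<gamma>) from_nat t"
    and decide: "\<forall>c d. (\<forall>r\<in>I. c r \<in> C \<and> d r \<in> C) \<longrightarrow>
        (feasible I (\<lambda>k. \<gamma>) from_nat c d \<longleftrightarrow> (\<forall>t\<in>T. (\<Prod>r\<in>I. d r ^ t r) \<sqsubset> (\<Prod>r\<in>I. c r ^ t r)))"
    using fourier_motzkin[of I "\<lambda>k. \<gamma>" from_nat] unfolding fm_certified_def by blast
  define restrict where "restrict t \<alpha> = t (to_nat \<alpha>)" for t :: "nat \<Rightarrow> nat" and \<alpha> :: "'n \<Rightarrow> nat"
  have sum_I: "(\<Sum>r\<in>I. g r) = (\<Sum>\<alpha>\<in>S. g (to_nat \<alpha>))" for g :: "nat \<Rightarrow> nat"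
    unfolding I_def by (rule sum_to_nat_image)
  have prod_I: "(\<Prod>r\<in>I. h r) = (\<Prod>\<alpha>\<in>S. h (to_nat \<alpha>))" for h :: "nat \<Rightarrow> 'a"
    unfolding I_def by (simp add: prod.reindex[OF inj_on_subset[OF inj_to_nat subset_UNIV]])
  have weights: "hull_weights S \<gamma> (restrict t)" if "t \<in> T" for t
    using certificate_hull_weights[OF assms] T(2) that by (simp add: I_def restrict_def[abs_def])
  have "(\<exists>x. (\<forall>j. x j \<in> C) \<and> (\<forall>\<alpha>\<in>S. a \<alpha> * monom x \<alpha> \<sqsubset> y * monom x \<gamma>))
      \<longleftrightarrow> (\<forall>c\<in>restrict ` T. (\<Prod>\<alpha>\<in>S. a \<alpha> ^ c \<alpha>) \<sqsubset> y ^ (\<Sum>\<alpha>\<in>S. c \<alpha>))"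
    if "\<forall>\<alpha>\<in>S. a \<alpha> \<in> C" "y \<in> C" for a y
  proof -
    have "(\<exists>x. (\<forall>j. x j \<in> C) \<and> (\<forall>\<alpha>\<in>S. a \<alpha> * monom x \<alpha> \<sqsubset> y * monom x \<gamma>))
        \<longleftrightarrow> feasible I (\<lambda>k. \<gamma>) from_nat (\<lambda>k. y) (\<lambda>k. a (from_nat k))"
      by (simp add: feasible_def I_def)
    also have "\<dots> \<longleftrightarrow> (\<forall>t\<in>T. (\<Prod>r\<in>I. a (from_nat r) ^ t r) \<sqsubset> (\<Prod>r\<in>I. y ^ t r))"
    proof -
      have "\<forall>r\<in>I. y \<in> C \<and> a (from_nat r) \<in> C" using that by (auto simp: I_def)
      then show ?thesis using decide[rule_format, of "\<lambda>k. y" "\<lambda>k. a (from_nat k)"] by simp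
    qed
    also have "\<dots> \<longleftrightarrow> (\<forall>c\<in>restrict ` T. (\<Prod>\<alpha>\<in>S. a \<alpha> ^ c \<alpha>) \<sqsubset> y ^ (\<Sum>\<alpha>\<in>S. c \<alpha>))"
      by (simp add: prod_I restrict_def power_sum flip: sum_I)
    finally show ?thesis .
  qed
  then show ?thesis using T(1) weights by (intro exI[of _ "restrict ` T"]) auto
qed

end

text \<open>Otherwise, by Fourier--Motzkin over the positive reals, some \<open>x > 0\<close>
  has \<open>x\<^sup>\<alpha> < x\<^sup>\<gamma>\<close> for all \<open>\<alpha> \<in> S\<close>, and the linear functional \<open>log x\<close> would separate
  \<open>\<gamma>\<close> strictly from \<open>S\<close>.\<close>
lemma hull_weights_exist:
  fixes S :: "('n::finite \<Rightarrow> nat) set"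
  assumes "finite S" "exp_to_real \<gamma> \<in> convex hull (exp_to_real ` S)"
  shows "\<exists>c. hull_weights S \<gamma> c"
proof -
  interpret R: ordered_div_group "{x::real. x > 0}" "(<)" by (rule real_ordered_div_group)
  obtain T where T: "\<forall>c\<in>T. hull_weights S \<gamma> c"
    and decide: "\<forall>a y. (\<forall>\<alpha>\<in>S. a \<alpha> \<in> {x::real. x > 0}) \<longrightarrow> y \<in> {x. x > 0} \<longrightarrow>
      ((\<exists>x. (\<forall>j. x j \<in> {x. x > 0}) \<and> (\<forall>\<alpha>\<in>S. a \<alpha> * monom x \<alpha> < y * monom x \<gamma>))
        \<longleftrightarrow> (\<forall>c\<in>T. (\<Prod>\<alpha>\<in>S. a \<alpha> ^ c \<alpha>) < y ^ (\<Sum>\<alpha>\<in>S. c \<alpha>)))"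
    using R.monomial_domination[OF assms(1), of \<gamma>] by blast
  show ?thesis
  proof (cases "T = {}")
    case False
    then show ?thesis using T by blast
  next
    case True
    have "\<exists>x::'n \<Rightarrow> real. (\<forall>j. x j \<in> {x. x > 0}) \<and> (\<forall>\<alpha>\<in>S. 1 * monom x \<alpha> < 1 * monom x \<gamma>)"
      using decide[rule_format, of "\<lambda>\<alpha>. 1" 1] True by simp
    then obtain x :: "'n \<Rightarrow> real" where x: "\<forall>j. x j > 0" "\<forall>\<alpha>\<in>S. monom x \<alpha> < monom x \<gamma>"
      by auto
    define w :: "real ^ 'n" where "w = (\<chi> j. ln (x j))"
    have log: "monom x \<alpha> = exp (w \<bullet> exp_to_real \<alpha>)" for \<alpha>
      using x(1)
      by (simp add: monom_def exp_to_real_def w_def inner_vec_def exp_sum mult.commute[of "ln _"]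
          exp_of_nat_mult)
    have "exp_to_real ` S \<subseteq> {v. w \<bullet> v < w \<bullet> exp_to_real \<gamma>}"
      using x(2) by (auto simp: log)
    then have "convex hull (exp_to_real ` S) \<subseteq> {v. w \<bullet> v < w \<bullet> exp_to_real \<gamma>}"
      by (rule hull_minimal) (rule convex_halfspace_lt)
    then show ?thesis using assms(2) by auto
  qed
qed

lemma hull_lattice_iff:
  "finite (supp_poly P) \<Longrightarrow> \<gamma> \<in> hull_lattice P \<longleftrightarrow> (\<exists>c. hull_weights (supp_poly P) \<gamma> c)"
  unfolding hull_lattice_def using hull_weights_exist hull_weights_in_hull by blast

lemma hull_lattice_finite:
  assumes fin: "finite (supp_poly P)"
  shows "finite (hull_lattice P)"
proof -
  define B where "B j = (\<Sum>\<alpha>\<in>supp_poly P. \<alpha> j)" for j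
  have "hull_lattice P \<subseteq> PiE UNIV (\<lambda>j. {..B j})"
  proof
    fix \<gamma> assume "\<gamma> \<in> hull_lattice P"
    then obtain c where c: "hull_weights (supp_poly P) \<gamma> c" using hull_lattice_iff[OF fin] by blast
    define m where "m = (\<Sum>\<alpha>\<in>supp_poly P. c \<alpha>)"
    have m: "m \<ge> 1" "\<forall>j. (\<Sum>\<alpha>\<in>supp_poly P. c \<alpha> * \<alpha> j) = m * \<gamma> j"
      using c unfolding hull_weights_def m_def by auto
    have "\<gamma> j \<le> B j" for j
    proof -
      have "m * \<gamma> j = (\<Sum>\<alpha>\<in>supp_poly P. c \<alpha> * \<alpha> j)" using m(2) by simp
      also have "\<dots> \<le> (\<Sum>\<alpha>\<in>supp_poly P. c \<alpha> * B j)"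
      proof (rule sum_mono)
        fix \<alpha> assume "\<alpha> \<in> supp_poly P"
        then have "\<alpha> j \<le> B j"
          unfolding B_def using member_le_sum[of \<alpha> "supp_poly P" "\<lambda>\<alpha>. \<alpha> j"] fin by simp
        then show "c \<alpha> * \<alpha> j \<le> c \<alpha> * B j" by simp
      qed
      also have "\<dots> = m * B j" by (simp add: m_def sum_distrib_right)
      finally show ?thesis using m(1) by simp
    qed
    then show "\<gamma> \<in> PiE UNIV (\<lambda>j. {..B j})" by (simp add: PiE_UNIV_domain)
  qed
  then show ?thesis by (rule finite_subset) (simp add: finite_PiE)
qed

lemma peval_monom: "peval P x = (\<Sum>\<alpha>\<in>supp_poly P. P \<alpha> * monom x \<alpha>)"
  by (simp add: peval_def monom_def)

lemma candidate_nonzero: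
  assumes "y \<in> conv_cands P \<gamma>"
  shows "y \<noteq> 0"
proof -
  obtain c where c: "hull_weights (supp_poly P) \<gamma> c"
    "y ^ (\<Sum>\<alpha>\<in>supp_poly P. c \<alpha>) = (\<Prod>\<alpha>\<in>supp_poly P. P \<alpha> ^ c \<alpha>)"
    using assms conv_cands_iff by blast
  have "(\<Prod>\<alpha>\<in>supp_poly P. P \<alpha> ^ c \<alpha>) \<noteq> 0"
    by (rule qf_prod_nonzero) (simp add: qf_power_nonzero supp_poly_def)
  then show ?thesis using c by (metis power_0_left hull_weights_def not_one_le_zero)
qed

text \<open>Each coefficient is a candidate for its own exponent (weight 1 on itself).\<close>
lemma coeff_candidate:
  assumes "finite (supp_poly P)" "\<alpha> \<in> supp_poly P"
  shows "P \<alpha> \<in> conv_cands P \<alpha>"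
proof -
  define c where "c \<beta> = (if \<beta> = \<alpha> then 1 else 0 :: nat)" for \<beta>
  have "(\<Sum>\<beta>\<in>supp_poly P. c \<beta> * f \<beta>) = f \<alpha>" for f
    using assms by (simp add: c_def if_distrib[of "\<lambda>k. k * _"] cong: if_cong)
  moreover have "(\<Prod>\<beta>\<in>supp_poly P. P \<beta> ^ c \<beta>) = P \<alpha>"
    using assms by (simp add: c_def if_distrib[of "power _"] cong: if_cong)
  ultimately show ?thesis
    unfolding conv_cands_iff hull_weights_def
    using assms(2) by (intro exI[of _ c]) (simp add: sum.delta[OF assms(1)] c_def)
qed

context
  assumes total: "qf_total TYPE('a::qfield1)"
    and closed: "qf_alg_closed TYPE('a)"
    and infinite: "infinite (UNIV :: 'a set)"
begin

interpretation K: ordered_div_group "{x::'a. x \<noteq> 0}" qf_less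
  by (rule qfield_ordered_div_group[OF total closed infinite])

lemma qf_power_le_cancel:
  assumes "m > 0" "qf_le ((a::'a) ^ m) (b ^ m)"
  shows "qf_le a b"
proof (rule ccontr)
  assume not_le: "\<not> qf_le a b"
  then have "qf_less b a" "a \<noteq> 0" using qf_not_le[OF total] qf_zero_le by blast+
  show False
  proof (cases "b = 0")
    case True
    moreover have "(0::'a) ^ m = 0" using assms(1) by (rule zero_power)
    ultimately have "a ^ m = 0" using assms(2) qf_le_zero by simp
    then show False using qf_power_nonzero[OF \<open>a \<noteq> 0\<close>] by blast
  next
    case False
    then have "qf_less (b ^ m) (a ^ m)"
      using K.power_strict_mono \<open>qf_less b a\<close> \<open>a \<noteq> 0\<close> assms(1) by simp
    then show False using assms(2) qf_antisym unfolding qf_less_def by blast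
  qed
qed

text \<open>Every lattice point of the hull has a candidate: take the root along hull weights.\<close>
lemma candidates_exist:
  fixes P :: "('n::finite \<Rightarrow> nat) \<Rightarrow> 'a"
  assumes "finite (supp_poly P)" "\<gamma> \<in> hull_lattice P"
  shows "conv_cands P \<gamma> \<noteq> {}"
proof -
  obtain c where c: "hull_weights (supp_poly P) \<gamma> c" using assms hull_lattice_iff by blast
  have "(\<Prod>\<alpha>\<in>supp_poly P. P \<alpha> ^ c \<alpha>) \<noteq> (0::'a)"
    by (rule qf_prod_nonzero) (simp add: qf_power_nonzero supp_poly_def)
  then obtain y where "y ^ (\<Sum>\<alpha>\<in>supp_poly P. c \<alpha>) = (\<Prod>\<alpha>\<in>supp_poly P. P \<alpha> ^ c \<alpha>)"
    using qf_root[OF closed] c by (metis hull_weights_def not_one_le_zero not_gr0)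
  then show ?thesis using c conv_cands_iff by blast
qed

text \<open>No candidate monomial \<open>y x\<^sup>\<gamma>\<close> strictly dominates all monomials of \<open>P\<close> at a point
  with nonzero coordinates: the weighted product of these inequalities would give
  \<open>(y x\<^sup>\<gamma>)\<^sup>m \<sqsubset> (y x\<^sup>\<gamma>)\<^sup>m\<close>.\<close>
lemma candidate_not_dominating:
  fixes P :: "('n::finite \<Rightarrow> nat) \<Rightarrow> 'a"
  assumes fin: "finite (supp_poly P)" and y: "y \<in> conv_cands P \<gamma>" and x: "\<forall>j. x j \<noteq> 0"
  shows "\<not> (\<forall>\<alpha>\<in>supp_poly P. qf_less (P \<alpha> * monom x \<alpha>) (y * monom x \<gamma>))"
proof
  assume dom: "\<forall>\<alpha>\<in>supp_poly P. qf_less (P \<alpha> * monom x \<alpha>) (y * monom x \<gamma>)"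
  obtain c where c: "hull_weights (supp_poly P) \<gamma> c"
    "y ^ (\<Sum>\<alpha>\<in>supp_poly P. c \<alpha>) = (\<Prod>\<alpha>\<in>supp_poly P. P \<alpha> ^ c \<alpha>)"
    using y conv_cands_iff by blast
  obtain \<alpha>0 where \<alpha>0: "\<alpha>0 \<in> supp_poly P" "c \<alpha>0 > 0"
    using c(1) unfolding hull_weights_def by (metis not_one_le_zero not_gr0 sum.neutral)
  have monom_x: "monom x f \<noteq> 0" for f using x by (intro monom_nonzero) auto
  have nonzero: "y * monom x \<gamma> \<noteq> 0" "P \<alpha> * monom x \<alpha> \<noteq> 0" if "\<alpha> \<in> supp_poly P" for \<alpha>
    using candidate_nonzero[OF y] that monom_x by (auto simp: supp_poly_def qf_mult_nonzero)
  have "qf_less (\<Prod>\<alpha>\<in>supp_poly P. (P \<alpha> * monom x \<alpha>) ^ c \<alpha>) (\<Prod>\<alpha>\<in>supp_poly P. (y * monom x \<gamma>) ^ c \<alpha>)"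
    by (rule K.prod_power_strict_mono[where A="\<lambda>\<alpha>. y * monom x \<gamma>" and w=c, OF fin _ \<alpha>0])
      (use dom nonzero in auto)
  moreover have "(\<Prod>\<alpha>\<in>supp_poly P. (P \<alpha> * monom x \<alpha>) ^ c \<alpha>)
      = (\<Prod>\<alpha>\<in>supp_poly P. P \<alpha> ^ c \<alpha>) * monom x \<gamma> ^ (\<Sum>\<alpha>\<in>supp_poly P. c \<alpha>)"
    by (rule prod_monomials_hull_weights[OF fin c(1)])
  then have "(\<Prod>\<alpha>\<in>supp_poly P. (P \<alpha> * monom x \<alpha>) ^ c \<alpha>) = (y * monom x \<gamma>) ^ (\<Sum>\<alpha>\<in>supp_poly P. c \<alpha>)"
    using c(2) by (simp add: power_mult_distrib)
  ultimately show False by (simp add: power_sum qf_less_def)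
qed

lemma candidates_decide_domination:
  fixes P :: "('n::finite \<Rightarrow> nat) \<Rightarrow> 'a"
  assumes fin: "finite (supp_poly P)"
  shows "\<exists>V. finite V \<and> V \<subseteq> conv_cands P \<gamma> \<and> (\<forall>y. y \<noteq> 0 \<longrightarrow>
    ((\<exists>x. (\<forall>j. x j \<noteq> 0) \<and> (\<forall>\<alpha>\<in>supp_poly P. qf_less (P \<alpha> * monom x \<alpha>) (y * monom x \<gamma>)))
      \<longleftrightarrow> (\<forall>v\<in>V. qf_less v y)))"
proof -
  obtain T where T: "finite T" "\<forall>c\<in>T. hull_weights (supp_poly P) \<gamma> c"
    and decide: "\<forall>a y. (\<forall>\<alpha>\<in>supp_poly P. a \<alpha> \<in> {x::'a. x \<noteq> 0}) \<longrightarrow> y \<in> {x. x \<noteq> 0} \<longrightarrow>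
      ((\<exists>x. (\<forall>j. x j \<in> {x. x \<noteq> 0}) \<and>
          (\<forall>\<alpha>\<in>supp_poly P. qf_less (a \<alpha> * monom x \<alpha>) (y * monom x \<gamma>)))
        \<longleftrightarrow> (\<forall>c\<in>T. qf_less (\<Prod>\<alpha>\<in>supp_poly P. a \<alpha> ^ c \<alpha>) (y ^ (\<Sum>\<alpha>\<in>supp_poly P. c \<alpha>))))"
    using K.monomial_domination[OF fin, of \<gamma>] by (elim exE conjE) (rule that)
  define m :: "(('n \<Rightarrow> nat) \<Rightarrow> nat) \<Rightarrow> nat" where "m c = (\<Sum>\<alpha>\<in>supp_poly P. c \<alpha>)" for c
  define pc where "pc c = (\<Prod>\<alpha>\<in>supp_poly P. P \<alpha> ^ c \<alpha>)" for c
  define v where "v c = K.groot (m c) (pc c)" for c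
  have pc: "pc c \<noteq> 0" for c
    unfolding pc_def by (rule qf_prod_nonzero) (simp add: qf_power_nonzero supp_poly_def)
  have m: "m c > 0" if "c \<in> T" for c
  proof -
    have "hull_weights (supp_poly P) \<gamma> c" using T(2) that by blast
    then show ?thesis by (simp add: m_def hull_weights_def)
  qed
  have v: "v c \<noteq> 0" "v c ^ m c = pc c" if "c \<in> T" for c
    using K.groot[of "pc c" "m c"] m[OF that] pc by (simp_all add: v_def)
  have "v ` T \<subseteq> conv_cands P \<gamma>"
  proof
    fix w assume "w \<in> v ` T"
    then obtain c where "c \<in> T" "w = v c" by blast
    then show "w \<in> conv_cands P \<gamma>"
      using T(2) v unfolding conv_cands_iff m_def pc_def by blast
  qed
  moreover have "(\<exists>x. (\<forall>j. x j \<noteq> 0) \<and> (\<forall>\<alpha>\<in>supp_poly P. qf_less (P \<alpha> * monom x \<alpha>) (y * monom x \<gamma>)))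
      \<longleftrightarrow> (\<forall>w\<in>v ` T. qf_less w y)" if y: "y \<noteq> 0" for y
  proof -
    have root: "qf_less (pc c) (y ^ m c) \<longleftrightarrow> qf_less (v c) y" if c: "c \<in> T" for c
      using K.power_less_iff[of "v c" y "m c"] v[OF c] m[OF c] y by simp
    have "\<forall>\<alpha>\<in>supp_poly P. P \<alpha> \<in> {x. x \<noteq> 0}" "y \<in> {x. x \<noteq> 0}"
      using y by (auto simp: supp_poly_def)
    then have "(\<exists>x. (\<forall>j. x j \<noteq> 0) \<and> (\<forall>\<alpha>\<in>supp_poly P. qf_less (P \<alpha> * monom x \<alpha>) (y * monom x \<gamma>)))
        \<longleftrightarrow> (\<forall>c\<in>T. qf_less (pc c) (y ^ m c))"
      using decide unfolding m_def pc_def by simp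
    also have "\<dots> \<longleftrightarrow> (\<forall>w\<in>v ` T. qf_less w y)" using root by auto
    finally show ?thesis .
  qed
  ultimately show ?thesis using T(1) by (intro exI[of _ "v ` T"]) auto
qed

lemma candidate_max_exists:
  fixes P :: "('n::finite \<Rightarrow> nat) \<Rightarrow> 'a"
  assumes fin: "finite (supp_poly P)" and ne: "conv_cands P \<gamma> \<noteq> {}"
  shows "\<exists>y\<in>conv_cands P \<gamma>. \<forall>z\<in>conv_cands P \<gamma>. qf_le z y"
proof -
  obtain V where V: "finite V" "V \<subseteq> conv_cands P \<gamma>"
    and decide: "\<forall>y. y \<noteq> 0 \<longrightarrow>
      ((\<exists>x. (\<forall>j. x j \<noteq> 0) \<and> (\<forall>\<alpha>\<in>supp_poly P. qf_less (P \<alpha> * monom x \<alpha>) (y * monom x \<gamma>)))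
        \<longleftrightarrow> (\<forall>v\<in>V. qf_less v y))"
    using candidates_decide_domination[OF fin, of \<gamma>] by (elim exE conjE) (rule that)
  have below_V: "\<exists>v\<in>V. qf_le z v" if z: "z \<in> conv_cands P \<gamma>" for z
  proof (rule ccontr)
    assume "\<not> (\<exists>v\<in>V. qf_le z v)"
    then have "\<forall>v\<in>V. qf_less v z" using qf_not_le[OF total] by blast
    then have "\<exists>x. (\<forall>j. x j \<noteq> 0) \<and> (\<forall>\<alpha>\<in>supp_poly P. qf_less (P \<alpha> * monom x \<alpha>) (z * monom x \<gamma>))"
      using decide[rule_format, OF candidate_nonzero[OF z]] by blast
    then show False using candidate_not_dominating[OF fin z] by blast
  qed
  then have "V \<noteq> {}" using ne by blast
  then obtain M where M: "M \<in> V" "sum (\<lambda>v. v) V = M"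
    using qf_sum_attained[OF total V(1)] by blast
  have "qf_le v M" if "v \<in> V" for v using qf_le_sum[OF V(1) that, of "\<lambda>v. v"] M(2) by simp
  then have "qf_le z M" if "z \<in> conv_cands P \<gamma>" for z
    using below_V[OF that] qf_trans by blast
  then show ?thesis using M(1) V(2) by blast
qed

lemma conv_poly_max:
  fixes P :: "('n::finite \<Rightarrow> nat) \<Rightarrow> 'a"
  assumes fin: "finite (supp_poly P)" and \<gamma>: "\<gamma> \<in> hull_lattice P"
  shows "conv_poly P \<gamma> \<in> conv_cands P \<gamma> \<and> (\<forall>z\<in>conv_cands P \<gamma>. qf_le z (conv_poly P \<gamma>))"
proof -
  obtain y where y: "y \<in> conv_cands P \<gamma>" "\<forall>z\<in>conv_cands P \<gamma>. qf_le z y"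
    using candidate_max_exists[OF fin candidates_exist[OF fin \<gamma>]] by blast
  have "(THE y. y \<in> conv_cands P \<gamma> \<and> (\<forall>z\<in>conv_cands P \<gamma>. qf_le z y)) = y"
    by (rule the_equality) (use y qf_antisym in blast)+
  then have "conv_poly P \<gamma> = y" using \<gamma> by (simp add: conv_poly_def)
  then show ?thesis using y by simp
qed

lemma supp_conv_poly:
  fixes P :: "('n::finite \<Rightarrow> nat) \<Rightarrow> 'a"
  assumes "finite (supp_poly P)"
  shows "supp_poly (conv_poly P) = hull_lattice P"
proof -
  have "conv_poly P \<gamma> \<noteq> 0 \<longleftrightarrow> \<gamma> \<in> hull_lattice P" for \<gamma>
    using conv_poly_max[OF assms, of \<gamma>] candidate_nonzero by (auto simp: conv_poly_def)
  then show ?thesis by (auto simp: supp_poly_def)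
qed

text \<open>Every monomial of \<open>conv(P)\<close> lies below \<open>P\<close>: with \<open>y = conv_poly P \<gamma>\<close> and hull weights
  \<open>c\<close>, \<open>(y x\<^sup>\<gamma>)\<^sup>m = \<Prod> (P\<^sub>\<alpha> x\<^sup>\<alpha>)\<^sup>c\<^sup>\<^sub>\<alpha> \<le> P(x)\<^sup>m\<close>.\<close>
lemma conv_monomial_le_peval:
  fixes P :: "('n::finite \<Rightarrow> nat) \<Rightarrow> 'a"
  assumes fin: "finite (supp_poly P)"
  shows "qf_le (conv_poly P \<gamma> * monom x \<gamma>) (peval P x)"
proof (cases "\<gamma> \<in> hull_lattice P")
  case False
  then show ?thesis by (simp add: conv_poly_def qf_zero_le)
next
  case True
  define y where "y = conv_poly P \<gamma>"
  obtain c where c: "hull_weights (supp_poly P) \<gamma> c"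
    "y ^ (\<Sum>\<alpha>\<in>supp_poly P. c \<alpha>) = (\<Prod>\<alpha>\<in>supp_poly P. P \<alpha> ^ c \<alpha>)"
    using conv_poly_max[OF fin True] conv_cands_iff y_def by blast
  have "(y * monom x \<gamma>) ^ (\<Sum>\<alpha>\<in>supp_poly P. c \<alpha>)
      = (\<Prod>\<alpha>\<in>supp_poly P. P \<alpha> ^ c \<alpha>) * monom x \<gamma> ^ (\<Sum>\<alpha>\<in>supp_poly P. c \<alpha>)"
    using c(2) by (simp add: power_mult_distrib)
  also have "\<dots> = (\<Prod>\<alpha>\<in>supp_poly P. (P \<alpha> * monom x \<alpha>) ^ c \<alpha>)"
    by (rule prod_monomials_hull_weights[OF fin c(1), symmetric])
  also have "qf_le \<dots> (\<Prod>\<alpha>\<in>supp_poly P. peval P x ^ c \<alpha>)"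
    using qf_le_sum[OF fin] by (intro qf_prod_mono qf_power_mono) (simp add: peval_monom)
  also have "\<dots> = peval P x ^ (\<Sum>\<alpha>\<in>supp_poly P. c \<alpha>)" by (simp add: power_sum)
  finally have "qf_le ((y * monom x \<gamma>) ^ (\<Sum>\<alpha>\<in>supp_poly P. c \<alpha>)) (peval P x ^ (\<Sum>\<alpha>\<in>supp_poly P. c \<alpha>))" .
  moreover have "(\<Sum>\<alpha>\<in>supp_poly P. c \<alpha>) > 0" using c(1) by (simp add: hull_weights_def)
  ultimately show ?thesis using qf_power_le_cancel y_def by blast
qed

text \<open>Each monomial of \<open>conv(P)\<close>
  is below \<open>P\<close>, and each monomial of \<open>P\<close> is below the corresponding one of \<open>conv(P)\<close>.\<close>
lemma peval_conv_poly:
  fixes P :: "('n::finite \<Rightarrow> nat) \<Rightarrow> 'a"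
  assumes fin: "finite (supp_poly P)"
  shows "peval (conv_poly P) x = peval P x"
proof (rule qf_antisym)
  have supp: "supp_poly (conv_poly P) = hull_lattice P" by (rule supp_conv_poly[OF fin])
  have finH: "finite (hull_lattice P)" by (rule hull_lattice_finite[OF fin])
  show "qf_le (peval (conv_poly P) x) (peval P x)"
    unfolding peval_monom[of "conv_poly P"] supp
    by (rule qf_sum_le[OF finH]) (rule conv_monomial_le_peval[OF fin])
  show "qf_le (peval P x) (peval (conv_poly P) x)"
    unfolding peval_monom[of P]
  proof (rule qf_sum_le[OF fin])
    fix \<alpha> assume \<alpha>: "\<alpha> \<in> supp_poly P"
    have cand: "P \<alpha> \<in> conv_cands P \<alpha>" by (rule coeff_candidate[OF fin \<alpha>])
    then have hull: "\<alpha> \<in> hull_lattice P"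
      using hull_lattice_iff[OF fin] conv_cands_iff by blast
    have "qf_le (P \<alpha> * monom x \<alpha>) (conv_poly P \<alpha> * monom x \<alpha>)"
      using conv_poly_max[OF fin hull] cand by (blast intro: qf_mult_right_mono)
    moreover have "qf_le (conv_poly P \<alpha> * monom x \<alpha>) (peval (conv_poly P) x)"
      unfolding peval_monom[of "conv_poly P"] supp by (rule qf_le_sum[OF finH hull])
    ultimately show "qf_le (P \<alpha> * monom x \<alpha>) (peval (conv_poly P) x)" by (rule qf_trans)
  qed
qed

text \<open>A monomial \<open>y x\<^sup>\<gamma>\<close> below \<open>P\<close> everywhere has its coefficient below some candidate:
  otherwise, by the decision lemma, it would strictly dominate all monomials of \<open>P\<close> at
  some point, and then exceed their maximum \<open>P(x)\<close>.\<close>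
lemma dominated_by_candidate:
  fixes P :: "('n::finite \<Rightarrow> nat) \<Rightarrow> 'a"
  assumes fin: "finite (supp_poly P)" and y: "y \<noteq> 0"
    and below: "\<forall>x. qf_le (y * monom x \<gamma>) (peval P x)"
  shows "\<exists>z\<in>conv_cands P \<gamma>. qf_le y z"
proof -
  obtain V where V: "V \<subseteq> conv_cands P \<gamma>"
    and decide: "\<forall>y. y \<noteq> 0 \<longrightarrow>
      ((\<exists>x. (\<forall>j. x j \<noteq> 0) \<and> (\<forall>\<alpha>\<in>supp_poly P. qf_less (P \<alpha> * monom x \<alpha>) (y * monom x \<gamma>)))
        \<longleftrightarrow> (\<forall>v\<in>V. qf_less v y))"
    using candidates_decide_domination[OF fin, of \<gamma>] by (elim exE conjE) (rule that)
  have "\<exists>v\<in>V. qf_le y v"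
  proof (rule ccontr)
    assume "\<not> (\<exists>v\<in>V. qf_le y v)"
    then have "\<forall>v\<in>V. qf_less v y" using qf_not_le[OF total] by blast
    then obtain x where x: "\<forall>j. x j \<noteq> 0"
      and dom: "\<forall>\<alpha>\<in>supp_poly P. qf_less (P \<alpha> * monom x \<alpha>) (y * monom x \<gamma>)"
      using decide[rule_format, OF y] by blast
    have ym: "y * monom x \<gamma> \<noteq> 0" using qf_mult_nonzero y monom_nonzero x by blast
    show False
    proof (cases "supp_poly P = {}")
      case True
      then have "peval P x = 0" by (simp add: peval_monom)
      then have "qf_le (y * monom x \<gamma>) 0" using below[rule_format, of x] by (simp only:)
      then show False using ym qf_le_zero by blast
    next
      case False
      then obtain \<alpha> where \<alpha>: "\<alpha> \<in> supp_poly P"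
        "(\<Sum>\<beta>\<in>supp_poly P. P \<beta> * monom x \<beta>) = P \<alpha> * monom x \<alpha>"
        using qf_sum_attained[OF total fin False] by blast
      then have "peval P x = P \<alpha> * monom x \<alpha>" by (simp add: peval_monom)
      then have "qf_less (peval P x) (y * monom x \<gamma>)" using dom \<alpha>(1) by simp
      then show False using below qf_antisym unfolding qf_less_def by blast
    qed
  qed
  then show ?thesis using V by blast
qed

lemma conv_poly_mono:
  fixes P Q :: "('n::finite \<Rightarrow> nat) \<Rightarrow> 'a"
  assumes finP: "finite (supp_poly P)" and finQ: "finite (supp_poly Q)"
    and le: "\<forall>x. qf_le (peval P x) (peval Q x)"
  shows "qf_le (conv_poly P \<gamma>) (conv_poly Q \<gamma>)"
proof (cases "conv_poly P \<gamma> = 0")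
  case True
  then show ?thesis by (simp add: qf_zero_le)
next
  case False
  have "\<forall>x. qf_le (conv_poly P \<gamma> * monom x \<gamma>) (peval Q x)"
    using conv_monomial_le_peval[OF finP] le qf_trans by blast
  then obtain z where z: "z \<in> conv_cands Q \<gamma>" "qf_le (conv_poly P \<gamma>) z"
    using dominated_by_candidate[OF finQ False] by blast
  then have "\<gamma> \<in> hull_lattice Q"
    using hull_lattice_iff[OF finQ] conv_cands_iff by blast
  then show ?thesis using conv_poly_max[OF finQ] z qf_trans by blast
qed

end

theorem lemma3p6:
  fixes P Q :: "('n::finite \<Rightarrow> nat) \<Rightarrow> 'a::qfield1"
  assumes "infinite (UNIV :: 'a set)"
    and "qf_total TYPE('a)"
    and "qf_alg_closed TYPE('a)"
    and "finite (supp_poly P)"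
    and "finite (supp_poly Q)"
  shows "(\<forall>x. peval (conv_poly P) x = peval P x)
         \<and> ((\<forall>x. peval P x = peval Q x) \<longleftrightarrow> conv_poly P = conv_poly Q)"
proof -
  note peval_conv = peval_conv_poly[OF assms(2,3,1)]
  note conv_mono = conv_poly_mono[OF assms(2,3,1)]
  have "conv_poly P = conv_poly Q" if same: "\<forall>x. peval P x = peval Q x"
  proof
    fix \<gamma>
    have "\<forall>x. qf_le (peval P x) (peval Q x)" "\<forall>x. qf_le (peval Q x) (peval P x)"
      using same by (auto intro: qf_refl)
    then show "conv_poly P \<gamma> = conv_poly Q \<gamma>"
      using conv_mono[OF assms(4,5)] conv_mono[OF assms(5,4)] qf_antisym by blast
  qed
  moreover have "\<forall>x. peval P x = peval Q x" if "conv_poly P = conv_poly Q"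
    using that peval_conv[OF assms(4)] peval_conv[OF assms(5)] by metis
  ultimately show ?thesis using peval_conv[OF assms(4)] by blast
qed

end
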